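(* Let $\mathbb{X}=\{\mathbf{x}_1,\dots,\mathbf{x}_N\}\subset\mathbb{R}^d$, let $P$ be a probability measure supported on the $N$ points of $\mathbb{X}$, let $Q$ be a probability measure on $\mathbb{R}^d$ with $\int|\mathbf{y}|^2dQ(\mathbf{y})<\infty$, and let $Q_m$ be the empirical measure of an i.i.d. sample $Y_1,\dots,Y_m$ from $Q$. Then $$E\left|\mathcal{W}_1(P,Q_m)-\mathcal{W}_1(P,Q)\right|\leq\frac{8\sqrt{2N}}{\sqrt{m}}K(\mathbb{X},Q),$$ where $K(\mathbb{X},Q)=\left(4\operatorname{diam}(\mathbb{X})+2\sqrt{\int|\mathbf{y}|^2dQ(\mathbf{y})}+2\operatorname{diam}(\mathbb{X})\right)\left(\log 2+\sqrt{2\operatorname{diam}(\mathbb{X})+1}\right)$.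
   Context: $|\cdot|$ is the Euclidean norm and $\mathcal{W}_1(\mu,\nu)=\inf_{\pi\in\Pi(\mu,\nu)}\int|\mathbf{x}-\mathbf{y}|\,d\pi(\mathbf{x},\mathbf{y})$ over couplings $\pi$ of $\mu,\nu$. $\operatorname{diam}(\mathbb{X})=\max_{i,j}|\mathbf{x}_i-\mathbf{x}_j|$. *)

theory Defs
  imports "HOL-Probability.Probability"
begin

definition couplings :: "'a::euclidean_space measure \<Rightarrow> 'a measure \<Rightarrow> ('a \<times> 'a) measure set" where
  "couplings \<mu> \<nu> = {\<pi>. sets \<pi> = sets (borel \<Otimes>\<^sub>M borel) \<and>
      distr \<pi> borel fst = \<mu> \<and> distr \<pi> borel snd = \<nu>}"

definition W1 :: "'a::euclidean_space measure \<Rightarrow> 'a measure \<Rightarrow> ennreal" where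
  "W1 \<mu> \<nu> = (INF \<pi>\<in>couplings \<mu> \<nu>. \<integral>\<^sup>+ p. ennreal (norm (fst p - snd p)) \<partial>\<pi>)"

text \<open>Empirical measure of the sample Y 0, ..., Y (m-1) at outcome \<omega>:
  (1/m) times the sum of the Dirac masses at the sample points (with multiplicities).\<close>
definition empirical_measure :: "nat \<Rightarrow> (nat \<Rightarrow> 'b \<Rightarrow> 'a::euclidean_space) \<Rightarrow> 'b \<Rightarrow> 'a measure" where
  "empirical_measure m Y \<omega> = distr (measure_pmf (pmf_of_set {..<m})) borel (\<lambda>i. Y i \<omega>)"

end

theory Submission
  imports Defs
begin

text \<open>Because \<open>P\<close> lives on the finite set \<open>X\<close>, a coupling of \<open>P\<close> with any \<open>\<nu>\<close> disintegrates
  into a Markov kernel \<open>k y x\<close> from the target back to \<open>X\<close>, and for the empirical measure of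
  \<open>m\<close> points the couplings are the \<open>m \<times> card X\<close> transport plans.

  Lower bound: choosing near-optimal plans measurably in the sample and averaging them over the
  sample gives a coupling of \<open>P\<close> with \<open>Q\<close>, since the mean of the laws of the \<open>Y i\<close> is \<open>Q\<close>.
  Hence \<open>W1 P Q\<close> is at most the expectation of \<open>W1 P Q\<^sub>m\<close>.

  Upper bound: a near-optimal kernel for \<open>(P, Q)\<close>, evaluated at the sample points, is a transport
  plan for \<open>Q\<^sub>m\<close> except that its column means \<open>q x\<close> miss the masses \<open>p x\<close>; rebalancing it
  costs at most \<open>diameter X * (\<Sum>x. \<bar>q x - p x\<bar>)\<close>. Both the sample mean of the kernel cost and
  the \<open>q x\<close> are means of i.i.d. variables, so their expected deviations are \<open>O(1/sqrt m)\<close>.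
  The resulting bound \<open>2 sqrt ((2 E|y|\<^sup>2 + 2 diam\<^sup>2) / m) + 2 diam sqrt (N / m)\<close> is sharper
  than the stated one.\<close>

lemma (in prob_space) integral_abs_le_sqrt_integral_square:
  fixes f :: "'a \<Rightarrow> real"
  assumes "integrable M f" and "integrable M (\<lambda>x. (f x)\<^sup>2)"
  shows "(\<integral>x. \<bar>f x\<bar> \<partial>M) \<le> sqrt (\<integral>x. (f x)\<^sup>2 \<partial>M)"
proof (rule real_le_rsqrt)
  have "0 \<le> variance (\<lambda>x. \<bar>f x\<bar>)" by simp
  also have "\<dots> = (\<integral>x. (f x)\<^sup>2 \<partial>M) - (\<integral>x. \<bar>f x\<bar> \<partial>M)\<^sup>2"
    using assms by (subst variance_eq) auto
  finally show "(\<integral>x. \<bar>f x\<bar> \<partial>M)\<^sup>2 \<le> (\<integral>x. (f x)\<^sup>2 \<partial>M)" by simp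
qed

lemma (in prob_space) expectation_square_sum_indep:
  fixes g :: "'i \<Rightarrow> 'a \<Rightarrow> real"
  assumes I: "finite I" and indep: "indep_vars (\<lambda>_. borel) g I"
    and int: "\<And>i. i \<in> I \<Longrightarrow> integrable M (g i)"
    and int2: "\<And>i. i \<in> I \<Longrightarrow> integrable M (\<lambda>x. (g i x)\<^sup>2)"
    and centered: "\<And>i. i \<in> I \<Longrightarrow> expectation (g i) = 0"
  shows "integrable M (\<lambda>x. (\<Sum>i\<in>I. g i x)\<^sup>2)"
    and "expectation (\<lambda>x. (\<Sum>i\<in>I. g i x)\<^sup>2) = (\<Sum>i\<in>I. expectation (\<lambda>x. (g i x)\<^sup>2))"
proof -
  have cross: "integrable M (\<lambda>x. g i x * g j x)
      \<and> expectation (\<lambda>x. g i x * g j x) = (if i = j then expectation (\<lambda>x. (g i x)\<^sup>2) else 0)"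
    if "i \<in> I" "j \<in> I" for i j
  proof (cases "i = j")
    case True
    then show ?thesis using int2 that by (simp add: power2_eq_square)
  next
    case False
    have ind: "indep_vars (\<lambda>_. borel) g {i, j}"
      using that by (intro indep_vars_subset[OF indep]) auto
    have li: "\<And>l. l \<in> {i, j} \<Longrightarrow> integrable M (g l)" using int that by auto
    show ?thesis
      using indep_vars_integrable[OF _ ind li] indep_vars_lebesgue_integral[OF _ ind li]
        centered that False by simp
  qed
  have square: "(\<Sum>i\<in>I. g i x)\<^sup>2 = (\<Sum>i\<in>I. \<Sum>j\<in>I. g i x * g j x)" for x
    by (simp add: power2_eq_square sum_product)
  show "integrable M (\<lambda>x. (\<Sum>i\<in>I. g i x)\<^sup>2)"
    unfolding square using cross by auto
  have "expectation (\<lambda>x. (\<Sum>i\<in>I. g i x)\<^sup>2) = (\<Sum>i\<in>I. \<Sum>j\<in>I. expectation (\<lambda>x. g i x * g j x))"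
    unfolding square using cross
    by (simp add: Bochner_Integration.integral_sum Bochner_Integration.integrable_sum)
  also have "\<dots> = (\<Sum>i\<in>I. expectation (\<lambda>x. (g i x)\<^sup>2))"
    using cross I by (simp cong: sum.cong)
  finally show "expectation (\<lambda>x. (\<Sum>i\<in>I. g i x)\<^sup>2) = (\<Sum>i\<in>I. expectation (\<lambda>x. (g i x)\<^sup>2))" .
qed

lemma (in prob_space) expectation_abs_sample_mean_deviation:
  fixes Y :: "nat \<Rightarrow> 'a \<Rightarrow> 'b" and f :: "'b \<Rightarrow> real"
  assumes m: "m \<ge> 1"
    and Y_rv: "\<And>i. i < m \<Longrightarrow> Y i \<in> measurable M S"
    and Y_dist: "\<And>i. i < m \<Longrightarrow> distr M S (Y i) = Q"
    and indep: "indep_vars (\<lambda>_. S) Y {..<m}"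
    and f: "f \<in> borel_measurable S" and f2: "integrable Q (\<lambda>y. (f y)\<^sup>2)"
  shows "integrable M (\<lambda>\<omega>. \<bar>(\<Sum>i<m. f (Y i \<omega>)) / m - (\<integral>y. f y \<partial>Q)\<bar>)"
    and "(\<integral>\<omega>. \<bar>(\<Sum>i<m. f (Y i \<omega>)) / m - (\<integral>y. f y \<partial>Q)\<bar> \<partial>M) \<le> sqrt ((\<integral>y. (f y)\<^sup>2 \<partial>Q) / m)"
proof -
  have Q: "Q = distr M S (Y 0)" using Y_dist[of 0] m by simp
  interpret Q: prob_space Q unfolding Q using Y_rv[of 0] m by (intro prob_space_distr) auto
  have f_int: "integrable Q f"
    by (rule Q.square_integrable_imp_integrable[OF _ f2]) (use f Q in simp)
  define \<mu> where "\<mu> = (\<integral>y. f y \<partial>Q)"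
  have law: "integrable M (\<lambda>\<omega>. h (Y i \<omega>))" "(\<integral>\<omega>. h (Y i \<omega>) \<partial>M) = (\<integral>y. h y \<partial>Q)"
    if "i < m" "integrable Q h" "h \<in> borel_measurable S" for i and h :: "'b \<Rightarrow> real"
    using that Y_rv[of i] Y_dist[of i] by (auto simp: integrable_distr_eq[symmetric] integral_distr)
  define g where "g i \<omega> = f (Y i \<omega>) - \<mu>" for i \<omega>
  have g: "integrable M (g i)" "integrable M (\<lambda>\<omega>. (g i \<omega>)\<^sup>2)" "expectation (g i) = 0"
    "expectation (\<lambda>\<omega>. (g i \<omega>)\<^sup>2) \<le> (\<integral>y. (f y)\<^sup>2 \<partial>Q)" if i: "i < m" for i
  proof -
    note fY = law[OF i f_int f] and f2Y = law[OF i f2]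
    show "integrable M (g i)"
      using fY by (simp add: g_def[abs_def])
    show "expectation (g i) = 0"
      using fY by (simp add: g_def[abs_def] \<mu>_def prob_space)
    have "(\<lambda>\<omega>. (g i \<omega>)\<^sup>2) = (\<lambda>\<omega>. (f (Y i \<omega>))\<^sup>2 - 2 * \<mu> * f (Y i \<omega>) + \<mu>\<^sup>2)"
      by (auto simp: g_def power2_eq_square algebra_simps)
    then show "integrable M (\<lambda>\<omega>. (g i \<omega>)\<^sup>2)" using fY f2Y f by auto
    have "expectation (\<lambda>\<omega>. (g i \<omega>)\<^sup>2) = variance (\<lambda>\<omega>. f (Y i \<omega>))"
      using fY by (simp add: g_def \<mu>_def)
    also have "\<dots> = (\<integral>y. (f y)\<^sup>2 \<partial>Q) - \<mu>\<^sup>2"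
      using fY f2Y f by (subst variance_eq) (auto simp: \<mu>_def)
    finally show "expectation (\<lambda>\<omega>. (g i \<omega>)\<^sup>2) \<le> (\<integral>y. (f y)\<^sup>2 \<partial>Q)" by simp
  qed
  have indep_g: "indep_vars (\<lambda>_. borel) g {..<m}"
    unfolding g_def using f by (intro indep_vars_compose2[OF indep]) auto
  note sum_square = expectation_square_sum_indep[OF _ indep_g g(1,2,3)]
  have mean: "(\<Sum>i<m. f (Y i \<omega>)) / m - \<mu> = (\<Sum>i<m. g i \<omega>) / m" for \<omega>
    using m by (simp add: g_def sum_subtractf field_simps)
  have int: "integrable M (\<lambda>\<omega>. (\<Sum>i<m. g i \<omega>) / m)" using g(1) by (auto intro!: Bochner_Integration.integrable_sum)
  have int2: "integrable M (\<lambda>\<omega>. ((\<Sum>i<m. g i \<omega>) / m)\<^sup>2)"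
    using sum_square(1) by (simp add: power_divide)
  show "integrable M (\<lambda>\<omega>. \<bar>(\<Sum>i<m. f (Y i \<omega>)) / m - (\<integral>y. f y \<partial>Q)\<bar>)"
    unfolding mean[unfolded \<mu>_def] by (rule Bochner_Integration.integrable_abs[OF int])
  have "(\<integral>\<omega>. \<bar>(\<Sum>i<m. f (Y i \<omega>)) / m - \<mu>\<bar> \<partial>M) \<le> sqrt (\<integral>\<omega>. ((\<Sum>i<m. g i \<omega>) / m)\<^sup>2 \<partial>M)"
    unfolding mean by (rule integral_abs_le_sqrt_integral_square[OF int int2])
  also have "(\<integral>\<omega>. ((\<Sum>i<m. g i \<omega>) / m)\<^sup>2 \<partial>M) = (\<Sum>i<m. expectation (\<lambda>\<omega>. (g i \<omega>)\<^sup>2)) / m\<^sup>2"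
    using sum_square(2) by (simp add: power_divide)
  also have "\<dots> \<le> (\<Sum>i<m. (\<integral>y. (f y)\<^sup>2 \<partial>Q)) / m\<^sup>2"
    using g(4) by (intro divide_right_mono sum_mono) auto
  also have "\<dots> = (\<integral>y. (f y)\<^sup>2 \<partial>Q) / m"
    using m by (simp add: power2_eq_square)
  finally show "(\<integral>\<omega>. \<bar>(\<Sum>i<m. f (Y i \<omega>)) / m - (\<integral>y. f y \<partial>Q)\<bar> \<partial>M) \<le> sqrt ((\<integral>y. (f y)\<^sup>2 \<partial>Q) / m)"
    by (simp add: \<mu>_def)
qed

lemma sum_sqrt_le_sqrt_card:
  fixes p :: "'a \<Rightarrow> real"
  assumes "\<And>x. x \<in> A \<Longrightarrow> 0 \<le> p x" and "(\<Sum>x\<in>A. p x) = 1"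
  shows "(\<Sum>x\<in>A. sqrt (p x)) \<le> sqrt (card A)"
proof -
  have "(\<Sum>x\<in>A. \<bar>sqrt (p x)\<bar> * \<bar>1\<bar>) \<le> L2_set (\<lambda>x. sqrt (p x)) A * L2_set (\<lambda>_. 1) A"
    by (rule L2_set_mult_ineq)
  moreover have "(\<Sum>x\<in>A. \<bar>sqrt (p x)\<bar> * \<bar>1\<bar>) = (\<Sum>x\<in>A. sqrt (p x))"
    using assms by (intro sum.cong) auto
  moreover have "L2_set (\<lambda>x. sqrt (p x)) A = 1"
    using assms by (simp add: L2_set_def cong: sum.cong)
  moreover have "L2_set (\<lambda>_. 1) A = sqrt (card A)"
    by (simp add: L2_set_def)
  ultimately show ?thesis by simp
qed

lemma sets_coupling: "\<pi> \<in> couplings \<mu> \<nu> \<Longrightarrow> sets \<pi> = sets (borel \<Otimes>\<^sub>M borel)"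
  by (simp add: couplings_def)

lemma space_coupling: "\<pi> \<in> couplings \<mu> \<nu> \<Longrightarrow> space \<pi> = UNIV"
  using sets_eq_imp_space_eq[OF sets_coupling] by (simp add: space_pair_measure)

lemma measurable_coupling_iff:
  "\<pi> \<in> couplings \<mu> \<nu> \<Longrightarrow> f \<in> measurable \<pi> N \<longleftrightarrow> f \<in> measurable (borel \<Otimes>\<^sub>M borel) N"
  by (simp only: measurable_cong_sets[OF sets_coupling refl])

lemma emeasure_coupling_fst:
  assumes \<pi>: "\<pi> \<in> couplings \<mu> \<nu>" and A: "A \<in> sets borel"
  shows "emeasure \<pi> (A \<times> UNIV) = emeasure \<mu> A"
proof -
  have "emeasure \<mu> A = emeasure (distr \<pi> borel fst) A" using \<pi> by (simp add: couplings_def)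
  also have "\<dots> = emeasure \<pi> (fst -` A \<inter> space \<pi>)"
    using A \<pi> by (simp add: emeasure_distr measurable_coupling_iff)
  also have "fst -` A \<inter> space \<pi> = A \<times> UNIV" using space_coupling[OF \<pi>] by auto
  finally show ?thesis by simp
qed

lemma emeasure_coupling_snd:
  assumes \<pi>: "\<pi> \<in> couplings \<mu> \<nu>" and B: "B \<in> sets borel"
  shows "emeasure \<pi> (UNIV \<times> B) = emeasure \<nu> B"
proof -
  have "emeasure \<nu> B = emeasure (distr \<pi> borel snd) B" using \<pi> by (simp add: couplings_def)
  also have "\<dots> = emeasure \<pi> (snd -` B \<inter> space \<pi>)"
    using B \<pi> by (simp add: emeasure_distr measurable_coupling_iff)
  also have "snd -` B \<inter> space \<pi> = UNIV \<times> B" using space_coupling[OF \<pi>] by auto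
  finally show ?thesis by simp
qed

definition coupling_slice :: "('a::euclidean_space \<times> 'a) measure \<Rightarrow> 'a \<Rightarrow> 'a measure" where
  "coupling_slice \<pi> x = distr (density \<pi> (indicator ({x} \<times> UNIV))) borel snd"

lemma sets_coupling_slice [simp]: "sets (coupling_slice \<pi> x) = sets borel"
  by (simp add: coupling_slice_def)

context
  fixes \<pi> :: "('a::euclidean_space \<times> 'a) measure" and \<mu> \<nu> :: "'a measure"
  assumes \<pi>: "\<pi> \<in> couplings \<mu> \<nu>"
begin

lemma nn_integral_coupling_slice:
  assumes g: "g \<in> borel_measurable borel"
  shows "(\<integral>\<^sup>+y. g y \<partial>coupling_slice \<pi> x) = (\<integral>\<^sup>+z. indicator ({x} \<times> UNIV) z * g (snd z) \<partial>\<pi>)"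
proof -
  have [measurable]: "indicator ({x} \<times> UNIV) \<in> borel_measurable \<pi>"
    "snd \<in> measurable \<pi> borel"
    by (simp_all add: measurable_coupling_iff[OF \<pi>])
  have "snd \<in> measurable (density \<pi> (indicator ({x} \<times> UNIV))) borel"
    by (simp add: measurable_coupling_iff[OF \<pi>])
  then show ?thesis
    unfolding coupling_slice_def using g by (simp add: nn_integral_distr nn_integral_density)
qed

lemma emeasure_coupling_slice:
  assumes B: "B \<in> sets borel"
  shows "emeasure (coupling_slice \<pi> x) B = emeasure \<pi> ({x} \<times> B)"
proof -
  have "emeasure (coupling_slice \<pi> x) B = (\<integral>\<^sup>+y. indicator B y \<partial>coupling_slice \<pi> x)"
    using B by simp
  also have "\<dots> = (\<integral>\<^sup>+z. indicator ({x} \<times> B) z \<partial>\<pi>)"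
    using B by (subst nn_integral_coupling_slice) (auto intro!: nn_integral_cong simp: indicator_def)
  also have "\<dots> = emeasure \<pi> ({x} \<times> B)"
    using B sets_coupling[OF \<pi>] by simp
  finally show ?thesis .
qed

lemma absolutely_continuous_coupling_slice:
  assumes \<nu>: "sets \<nu> = sets borel"
  shows "absolutely_continuous \<nu> (coupling_slice \<pi> x)"
  unfolding absolutely_continuous_def
proof
  fix B assume "B \<in> null_sets \<nu>"
  then have B: "B \<in> sets borel" "emeasure \<nu> B = 0" using \<nu> by auto
  have "emeasure \<pi> ({x} \<times> B) \<le> emeasure \<pi> (UNIV \<times> B)"
    using B sets_coupling[OF \<pi>] by (intro emeasure_mono) auto
  then show "B \<in> null_sets (coupling_slice \<pi> x)"
    using B emeasure_coupling_snd[OF \<pi> B(1)] by (simp add: emeasure_coupling_slice null_sets_def)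
qed

lemma nn_integral_RN_deriv_coupling_slice:
  assumes \<nu>: "prob_space \<nu>" "sets \<nu> = sets borel" and g: "g \<in> borel_measurable borel"
  shows "(\<integral>\<^sup>+y. RN_deriv \<nu> (coupling_slice \<pi> x) y * g y \<partial>\<nu>)
    = (\<integral>\<^sup>+z. indicator ({x} \<times> UNIV) z * g (snd z) \<partial>\<pi>)"
proof -
  interpret \<nu>: prob_space \<nu> by (rule \<nu>(1))
  have "(\<integral>\<^sup>+y. RN_deriv \<nu> (coupling_slice \<pi> x) y * g y \<partial>\<nu>) = (\<integral>\<^sup>+y. g y \<partial>coupling_slice \<pi> x)"
    using g \<nu>(2)
    by (intro \<nu>.RN_deriv_nn_integral[symmetric] absolutely_continuous_coupling_slice)
      (simp_all add: measurable_cong_sets[OF \<nu>(2) refl])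
  then show ?thesis using nn_integral_coupling_slice[OF g] by simp
qed

lemma sum_nn_integral_RN_deriv_cost_le:
  assumes \<nu>: "prob_space \<nu>" "sets \<nu> = sets borel" and S: "finite S"
  shows "(\<Sum>x\<in>S. \<integral>\<^sup>+y. RN_deriv \<nu> (coupling_slice \<pi> x) y * ennreal (norm (x - y)) \<partial>\<nu>)
    \<le> (\<integral>\<^sup>+z. ennreal (norm (fst z - snd z)) \<partial>\<pi>)"
proof -
  have "(\<Sum>x\<in>S. \<integral>\<^sup>+y. RN_deriv \<nu> (coupling_slice \<pi> x) y * ennreal (norm (x - y)) \<partial>\<nu>)
      = (\<Sum>x\<in>S. \<integral>\<^sup>+z. indicator ({x} \<times> UNIV) z * ennreal (norm (fst z - snd z)) \<partial>\<pi>)"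
    by (intro sum.cong refl trans[OF nn_integral_RN_deriv_coupling_slice[OF \<nu>]] nn_integral_cong)
      (auto simp: indicator_def)
  also have "\<dots> = (\<integral>\<^sup>+z. (\<Sum>x\<in>S. indicator ({x} \<times> UNIV) z * ennreal (norm (fst z - snd z))) \<partial>\<pi>)"
    using sets_coupling[OF \<pi>] by (subst nn_integral_sum) (auto simp: measurable_coupling_iff[OF \<pi>])
  also have "\<dots> \<le> (\<integral>\<^sup>+z. ennreal (norm (fst z - snd z)) \<partial>\<pi>)"
  proof (rule nn_integral_mono)
    fix z :: "'a \<times> 'a"
    have "(\<Sum>x\<in>S. indicator ({x} \<times> UNIV) z * ennreal (norm (fst z - snd z)))
        = (\<Sum>x\<in>S. if x = fst z then ennreal (norm (fst z - snd z)) else 0)"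
      by (intro sum.cong refl) (auto simp: indicator_def mem_Times_iff)
    also have "\<dots> \<le> ennreal (norm (fst z - snd z))"
      using S by (simp add: sum.delta')
    finally show "(\<Sum>x\<in>S. indicator ({x} \<times> UNIV) z * ennreal (norm (fst z - snd z)))
        \<le> ennreal (norm (fst z - snd z))" .
  qed
  finally show ?thesis .
qed

end

definition empirical :: "nat \<Rightarrow> (nat \<Rightarrow> 'a::euclidean_space) \<Rightarrow> 'a measure" where
  "empirical m y = distr (measure_pmf (pmf_of_set {..<m})) borel y"

lemma empirical_measure_eq_empirical: "empirical_measure m Y \<omega> = empirical m (\<lambda>i. Y i \<omega>)"
  by (simp add: empirical_measure_def empirical_def)

lemma sets_empirical [simp]: "sets (empirical m y) = sets borel"
  by (simp add: empirical_def)

lemma prob_space_empirical: "m \<ge> 1 \<Longrightarrow> prob_space (empirical m y)"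
  unfolding empirical_def
  by (intro prob_space.prob_space_distr) (auto simp: measure_pmf.prob_space_axioms)

lemma nn_integral_empirical:
  assumes "m \<ge> 1" and "f \<in> borel_measurable borel"
  shows "(\<integral>\<^sup>+z. f z \<partial>empirical m y) = (\<Sum>i<m. f (y i)) / of_nat m"
proof -
  have "(\<integral>\<^sup>+z. f z \<partial>empirical m y) = (\<integral>\<^sup>+i. f (y i) \<partial>measure_pmf (pmf_of_set {..<m}))"
    unfolding empirical_def using assms(2) by (subst nn_integral_distr) auto
  also have "\<dots> = (\<Sum>i\<in>{..<m}. f (y i)) / of_nat (card {..<m})"
    using assms(1) by (intro nn_integral_pmf_of_set) (auto simp: lessThan_empty_iff)
  finally show ?thesis by simp
qed

lemma emeasure_empirical:
  assumes "m \<ge> 1" and "B \<in> sets borel"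
  shows "emeasure (empirical m y) B = (\<Sum>i<m. indicator B (y i)) / of_nat m"
  using assms nn_integral_empirical[of m "indicator B" y] by simp

definition sample_dist :: "nat \<Rightarrow> (nat \<Rightarrow> 'a::real_normed_vector) \<Rightarrow> (nat \<Rightarrow> 'a) \<Rightarrow> real" where
  "sample_dist m y z = (\<Sum>i<m. norm (y i - z i))"

lemma sample_dist_commute: "sample_dist m y z = sample_dist m z y"
  unfolding sample_dist_def by (simp add: norm_minus_commute)

lemma sample_dist_nonneg: "0 \<le> sample_dist m y z"
  unfolding sample_dist_def by (simp add: sum_nonneg)

lemma borel_measurable_sample_dist:
  fixes Z :: "nat \<Rightarrow> 'b \<Rightarrow> 'a::euclidean_space"
  shows "(\<And>i. i < m \<Longrightarrow> Z i \<in> borel_measurable M) \<Longrightarrow> (\<lambda>\<omega>. sample_dist m (\<lambda>i. Z i \<omega>) z) \<in> borel_measurable M"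
  unfolding sample_dist_def by (intro borel_measurable_sum) auto

lemma dense_samples:
  obtains g :: "nat \<Rightarrow> nat \<Rightarrow> 'a::{real_normed_vector, second_countable_topology}"
  where "\<And>y \<delta>. \<delta> > 0 \<Longrightarrow> \<exists>n. sample_dist m y (g n) < \<delta>"
proof -
  obtain D :: "'a set" where D: "countable D" "\<And>U. open U \<Longrightarrow> U \<noteq> {} \<Longrightarrow> \<exists>d\<in>D. d \<in> U"
    using countable_dense_setE by blast
  define G where "G = PiE {..<m} (\<lambda>_. D)"
  have G: "countable G" unfolding G_def using D(1) by (intro countable_PiE) auto
  have "\<exists>n. sample_dist m y (from_nat_into G n) < \<delta>" if \<delta>: "\<delta> > 0" for y \<delta>
  proof -
    have "\<delta> / (m + 1) > 0" using \<delta> by simp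
    then have "\<exists>d. d \<in> D \<and> d \<in> ball (y i) (\<delta> / (m + 1))" for i
      using D(2)[of "ball (y i) (\<delta> / (m + 1))"] by auto
    then obtain c where c: "\<And>i. c i \<in> D \<and> dist (y i) (c i) < \<delta> / (m + 1)"
      using choice[of "\<lambda>i d. d \<in> D \<and> d \<in> ball (y i) (\<delta> / (m + 1))"] by auto
    have "restrict c {..<m} \<in> G" unfolding G_def using c by auto
    then obtain n where n: "from_nat_into G n = restrict c {..<m}"
      using from_nat_into_surj[OF G] by blast
    have "sample_dist m y (restrict c {..<m}) \<le> (\<Sum>i<m. \<delta> / (m + 1))"
      unfolding sample_dist_def using c by (intro sum_mono) (simp add: dist_norm less_imp_le)
    also have "\<dots> < \<delta>" using \<delta> by (simp add: field_simps)
    finally have "sample_dist m y (from_nat_into G n) < \<delta>" by (simp add: n)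
    then show ?thesis ..
  qed
  then show ?thesis using that by blast
qed

locale semidiscrete_transport =
  fixes X :: "'a::euclidean_space set" and P :: "'a measure"
  assumes finite_X: "finite X" and X_nonempty: "X \<noteq> {}"
    and prob_P: "prob_space P" and sets_P: "sets P = sets borel" and P_X: "emeasure P X = 1"
begin

definition mass :: "'a \<Rightarrow> real" where
  "mass x = measure P {x}"

lemma mass_nonneg: "0 \<le> mass x"
  by (simp add: mass_def)

lemma emeasure_singleton: "emeasure P {x} = ennreal (mass x)"
proof -
  interpret prob_space P by (rule prob_P)
  show ?thesis by (simp add: mass_def emeasure_eq_measure)
qed

lemma X_closed: "closed X"
  using finite_X by (rule finite_imp_closed)

lemma emeasure_outside_X: "emeasure P (B - X) = 0"
proof -
  interpret prob_space P by (rule prob_P)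
  have X: "X \<in> sets P" using X_closed sets_P by simp
  have "emeasure P (space P - X) = 0"
    using emeasure_compl[OF X] P_X emeasure_space_1 by simp
  moreover have "B - X \<subseteq> space P - X" using sets_eq_imp_space_eq[OF sets_P] by auto
  moreover have "space P - X \<in> sets P" using X by auto
  ultimately show ?thesis by (metis emeasure_eq_0)
qed

lemma emeasure_eq_sum_mass:
  assumes B: "B \<in> sets borel"
  shows "emeasure P B = ennreal (\<Sum>x\<in>X. indicator B x * mass x)"
proof -
  have BX: "B \<inter> X \<in> sets P" "B - X \<in> sets P" using B X_closed sets_P by simp_all
  have "emeasure P B = emeasure P ((B \<inter> X) \<union> (B - X))"
    by (simp add: Int_Diff_Un)
  also have "\<dots> = emeasure P (B \<inter> X)"
    using emeasure_outside_X by (subst plus_emeasure[OF BX, symmetric]) auto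
  also have "\<dots> = (\<Sum>x\<in>X \<inter> B. emeasure P {x})"
    using finite_X sets_P by (subst emeasure_eq_sum_singleton) (auto simp: Int_commute)
  also have "\<dots> = (\<Sum>x\<in>X. if x \<in> B then ennreal (mass x) else 0)"
    unfolding emeasure_singleton by (rule sum.inter_restrict[OF finite_X])
  also have "\<dots> = (\<Sum>x\<in>X. ennreal (indicator B x * mass x))"
    by (intro sum.cong) (auto simp: indicator_def)
  also have "\<dots> = ennreal (\<Sum>x\<in>X. indicator B x * mass x)"
    by (rule sum_ennreal) (simp add: mass_nonneg)
  finally show ?thesis .
qed

lemma sum_mass: "(\<Sum>x\<in>X. mass x) = 1"
  using emeasure_eq_sum_mass[of X] X_closed P_X by simp

lemma emeasure_coupling_restrict_X:
  assumes \<pi>: "\<pi> \<in> couplings P \<nu>" and A: "A \<in> sets borel"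
  shows "emeasure \<pi> (X \<times> A) = emeasure \<pi> (UNIV \<times> A)"
proof -
  have X: "X \<in> sets borel" using X_closed by simp
  have XA: "X \<times> A \<in> sets \<pi>" "(UNIV - X) \<times> A \<in> sets \<pi>" "(UNIV - X) \<times> UNIV \<in> sets \<pi>"
    using A X sets_coupling[OF \<pi>] by simp_all
  have "emeasure \<pi> ((UNIV - X) \<times> A) \<le> emeasure \<pi> ((UNIV - X) \<times> UNIV)"
    by (rule emeasure_mono[OF _ XA(3)]) auto
  also have "\<dots> = 0"
    using X emeasure_outside_X[of UNIV] by (simp add: emeasure_coupling_fst[OF \<pi>])
  finally have null: "emeasure \<pi> ((UNIV - X) \<times> A) = 0" by simp
  have "emeasure \<pi> (UNIV \<times> A) = emeasure \<pi> (X \<times> A \<union> (UNIV - X) \<times> A)"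
    by (rule arg_cong[where f = "emeasure \<pi>"]) auto
  also have "\<dots> = emeasure \<pi> (X \<times> A) + emeasure \<pi> ((UNIV - X) \<times> A)"
    by (rule plus_emeasure[OF XA(1,2), symmetric]) auto
  finally show ?thesis using null by simp
qed

text \<open>A transport plan from \<open>P\<close> to the uniform measure on \<open>m\<close> sample points: \<open>w i x\<close> is the
  share of the mass \<open>1/m\<close> of the \<open>i\<close>-th sample point that is coupled with \<open>x\<close>.\<close>

definition transport_plans :: "nat \<Rightarrow> (nat \<Rightarrow> 'a \<Rightarrow> real) set" where
  "transport_plans m = {w. (\<forall>i<m. \<forall>x\<in>X. 0 \<le> w i x) \<and> (\<forall>i<m. (\<Sum>x\<in>X. w i x) = 1)
      \<and> (\<forall>x\<in>X. (\<Sum>i<m. w i x) / m = mass x)}"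

definition plan_cost :: "nat \<Rightarrow> (nat \<Rightarrow> 'a) \<Rightarrow> (nat \<Rightarrow> 'a \<Rightarrow> real) \<Rightarrow> real" where
  "plan_cost m y w = (\<Sum>i<m. \<Sum>x\<in>X. w i x * norm (x - y i)) / m"

lemma plan_cost_nonneg: "w \<in> transport_plans m \<Longrightarrow> 0 \<le> plan_cost m y w"
  unfolding plan_cost_def transport_plans_def by (auto intro!: sum_nonneg divide_nonneg_nonneg)

lemma product_plan: "m \<ge> 1 \<Longrightarrow> (\<lambda>i x. mass x) \<in> transport_plans m"
  unfolding transport_plans_def using sum_mass mass_nonneg by auto

text \<open>Draw \<open>\<omega>\<close> from \<open>R\<close> and then couple the points \<open>Z i \<omega>\<close> with \<open>X\<close> according to the plan \<open>w \<omega>\<close>.\<close>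

definition plan_coupling ::
    "nat \<Rightarrow> 'c measure \<Rightarrow> (nat \<Rightarrow> 'c \<Rightarrow> 'a) \<Rightarrow> ('c \<Rightarrow> nat \<Rightarrow> 'a \<Rightarrow> real) \<Rightarrow> ('a \<times> 'a) measure" where
  "plan_coupling m R Z w = distr
     (density (count_space ({..<m} \<times> X) \<Otimes>\<^sub>M R) (\<lambda>(ix, \<omega>). ennreal (w \<omega> (fst ix) (snd ix) / m)))
     (borel \<Otimes>\<^sub>M borel) (\<lambda>(ix, \<omega>). (snd ix, Z (fst ix) \<omega>))"

context
  fixes m :: nat and R :: "'c measure" and Z :: "nat \<Rightarrow> 'c \<Rightarrow> 'a" and w :: "'c \<Rightarrow> nat \<Rightarrow> 'a \<Rightarrow> real"
  assumes R: "prob_space R" and m: "m \<ge> 1"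
    and Z: "\<And>i. i < m \<Longrightarrow> Z i \<in> borel_measurable R"
    and w_measurable: "\<And>i x. (\<lambda>\<omega>. w \<omega> i x) \<in> borel_measurable R"
    and w_plan: "\<And>\<omega>. \<omega> \<in> space R \<Longrightarrow> w \<omega> \<in> transport_plans m"
begin

lemma sets_plan_coupling: "sets (plan_coupling m R Z w) = sets (borel \<Otimes>\<^sub>M borel)"
  by (simp add: plan_coupling_def)

lemma measurable_plan_coupling_iff:
  "f \<in> measurable (plan_coupling m R Z w) N \<longleftrightarrow> f \<in> measurable (borel \<Otimes>\<^sub>M borel) N"
  by (simp only: measurable_cong_sets[OF sets_plan_coupling refl])

lemma nn_integral_plan_coupling:
  assumes h: "h \<in> borel_measurable (borel \<Otimes>\<^sub>M borel)" and h_nonneg: "\<And>z. 0 \<le> h z"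
  shows "(\<integral>\<^sup>+z. ennreal (h z) \<partial>plan_coupling m R Z w)
    = (\<integral>\<^sup>+\<omega>. ennreal (\<Sum>i<m. \<Sum>x\<in>X. w \<omega> i x / m * h (x, Z i \<omega>)) \<partial>R)"
proof -
  interpret R: prob_space R by (rule R)
  define I where "I = {..<m} \<times> X"
  define F :: "(nat \<times> 'a) \<times> 'c \<Rightarrow> ennreal" where "F = (\<lambda>(ix, \<omega>). ennreal (w \<omega> (fst ix) (snd ix) / m))"
  define T :: "(nat \<times> 'a) \<times> 'c \<Rightarrow> 'a \<times> 'a" where "T = (\<lambda>(ix, \<omega>). (snd ix, Z (fst ix) \<omega>))"
  have I: "finite I" "countable I" using finite_X by (simp_all add: I_def countable_finite)
  interpret C: sigma_finite_measure "count_space I"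
    by (rule sigma_finite_measure_count_space_finite[OF I(1)])
  interpret CR: pair_sigma_finite "count_space I" R
    by (simp add: pair_sigma_finite_def C.sigma_finite_measure_axioms R.sigma_finite_measure_axioms)
  have T: "T \<in> measurable (count_space I \<Otimes>\<^sub>M R) (borel \<Otimes>\<^sub>M borel)"
  proof (rule measurable_pair_measure_countable1[OF I(2)])
    fix ix assume "ix \<in> I"
    then show "(\<lambda>\<omega>. T (ix, \<omega>)) \<in> measurable R (borel \<Otimes>\<^sub>M borel)"
      using Z by (auto simp: I_def T_def)
  qed
  have F: "F \<in> borel_measurable (count_space I \<Otimes>\<^sub>M R)"
    by (rule measurable_pair_measure_countable1[OF I(2)]) (use w_measurable in \<open>auto simp: F_def\<close>)
  have "(\<integral>\<^sup>+z. ennreal (h z) \<partial>plan_coupling m R Z w)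
      = (\<integral>\<^sup>+z. F z * ennreal (h (T z)) \<partial>(count_space I \<Otimes>\<^sub>M R))"
    unfolding plan_coupling_def F_def[symmetric] T_def[symmetric] I_def[symmetric]
    using h T F by (simp add: nn_integral_distr nn_integral_density)
  also have "\<dots> = (\<integral>\<^sup>+\<omega>. (\<Sum>ix\<in>I. F (ix, \<omega>) * ennreal (h (T (ix, \<omega>)))) \<partial>R)"
    using h T F I by (simp add: CR.nn_integral_snd[symmetric] nn_integral_count_space_finite)
  also have "\<dots> = (\<integral>\<^sup>+\<omega>. ennreal (\<Sum>i<m. \<Sum>x\<in>X. w \<omega> i x / m * h (x, Z i \<omega>)) \<partial>R)"
  proof (rule nn_integral_cong)
    fix \<omega> assume "\<omega> \<in> space R"
    then have nonneg: "0 \<le> w \<omega> (fst ix) (snd ix) / m" if "ix \<in> I" for ix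
      using w_plan that by (auto simp: transport_plans_def I_def)
    have "(\<Sum>ix\<in>I. F (ix, \<omega>) * ennreal (h (T (ix, \<omega>))))
        = (\<Sum>ix\<in>I. ennreal (w \<omega> (fst ix) (snd ix) / m * h (T (ix, \<omega>))))"
      using nonneg by (intro sum.cong refl) (subst ennreal_mult[OF _ h_nonneg], auto simp: F_def)
    also have "\<dots> = ennreal (\<Sum>ix\<in>I. w \<omega> (fst ix) (snd ix) / m * h (T (ix, \<omega>)))"
      by (intro sum_ennreal mult_nonneg_nonneg nonneg h_nonneg)
    also have "(\<Sum>ix\<in>I. w \<omega> (fst ix) (snd ix) / m * h (T (ix, \<omega>)))
        = (\<Sum>i<m. \<Sum>x\<in>X. w \<omega> i x / m * h (x, Z i \<omega>))"
      by (simp add: I_def T_def sum.cartesian_product split_def)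
    finally show "(\<Sum>ix\<in>I. F (ix, \<omega>) * ennreal (h (T (ix, \<omega>))))
        = ennreal (\<Sum>i<m. \<Sum>x\<in>X. w \<omega> i x / m * h (x, Z i \<omega>))" .
  qed
  finally show ?thesis .
qed

lemma distr_plan_coupling_fst: "distr (plan_coupling m R Z w) borel fst = P"
proof (rule measure_eqI)
  interpret R: prob_space R by (rule R)
  show "sets (distr (plan_coupling m R Z w) borel fst) = sets P" using sets_P by simp
  fix A assume "A \<in> sets (distr (plan_coupling m R Z w) borel fst)"
  then have A: "A \<in> sets borel" by simp
  have "emeasure (distr (plan_coupling m R Z w) borel fst) A
      = (\<integral>\<^sup>+z. indicator A z \<partial>distr (plan_coupling m R Z w) borel fst)"
    using A by simp
  also have "\<dots> = (\<integral>\<^sup>+z. ennreal (indicator A (fst z)) \<partial>plan_coupling m R Z w)"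
    using A by (subst nn_integral_distr) (auto simp: measurable_plan_coupling_iff ennreal_indicator)
  also have "\<dots> = (\<integral>\<^sup>+\<omega>. ennreal (\<Sum>i<m. \<Sum>x\<in>X. w \<omega> i x / m * indicator A x) \<partial>R)"
    using A by (subst nn_integral_plan_coupling) auto
  also have "\<dots> = (\<integral>\<^sup>+\<omega>. ennreal (\<Sum>x\<in>X. indicator A x * mass x) \<partial>R)"
  proof (rule nn_integral_cong)
    fix \<omega> assume "\<omega> \<in> space R"
    then have col: "(\<Sum>i<m. w \<omega> i x) / m = mass x" if "x \<in> X" for x
      using w_plan that by (simp add: transport_plans_def)
    have "(\<Sum>i<m. \<Sum>x\<in>X. w \<omega> i x / m * indicator A x)
        = (\<Sum>x\<in>X. indicator A x * ((\<Sum>i<m. w \<omega> i x) / m))"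
      by (subst sum.swap) (simp add: sum_distrib_left sum_divide_distrib mult.commute)
    also have "\<dots> = (\<Sum>x\<in>X. indicator A x * mass x)"
      using col by (intro sum.cong) auto
    finally show "ennreal (\<Sum>i<m. \<Sum>x\<in>X. w \<omega> i x / m * indicator A x)
        = ennreal (\<Sum>x\<in>X. indicator A x * mass x)" by simp
  qed
  also have "\<dots> = emeasure P A"
    using A by (simp add: emeasure_eq_sum_mass R.emeasure_space_1)
  finally show "emeasure (distr (plan_coupling m R Z w) borel fst) A = emeasure P A" .
qed

lemma emeasure_distr_plan_coupling_snd:
  assumes B: "B \<in> sets borel"
  shows "emeasure (distr (plan_coupling m R Z w) borel snd) B
    = (\<Sum>i<m. emeasure R (Z i -` B \<inter> space R)) / m"
proof -
  have "emeasure (distr (plan_coupling m R Z w) borel snd) B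
      = (\<integral>\<^sup>+z. indicator B z \<partial>distr (plan_coupling m R Z w) borel snd)"
    using B by simp
  also have "\<dots> = (\<integral>\<^sup>+z. ennreal (indicator B (snd z)) \<partial>plan_coupling m R Z w)"
    using B by (subst nn_integral_distr) (auto simp: measurable_plan_coupling_iff ennreal_indicator)
  also have "\<dots> = (\<integral>\<^sup>+\<omega>. ennreal (\<Sum>i<m. \<Sum>x\<in>X. w \<omega> i x / m * indicator B (Z i \<omega>)) \<partial>R)"
    using B by (subst nn_integral_plan_coupling) auto
  also have "\<dots> = (\<integral>\<^sup>+\<omega>. (\<Sum>i<m. indicator (Z i -` B \<inter> space R) \<omega>) / of_nat m \<partial>R)"
  proof (rule nn_integral_cong)
    fix \<omega> assume \<omega>: "\<omega> \<in> space R"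
    then have row: "(\<Sum>x\<in>X. w \<omega> i x) = 1" if "i < m" for i
      using w_plan that by (simp add: transport_plans_def)
    have row_scaled: "(\<Sum>x\<in>X. w \<omega> i x / m * c) = c * (\<Sum>x\<in>X. w \<omega> i x) / m"
      for i and c :: real
      by (simp only: sum_distrib_right[symmetric] sum_divide_distrib[symmetric]) simp
    have "(\<Sum>i<m. \<Sum>x\<in>X. w \<omega> i x / m * indicator B (Z i \<omega>))
        = (\<Sum>i<m. indicator B (Z i \<omega>) * (\<Sum>x\<in>X. w \<omega> i x)) / m"
      unfolding row_scaled by (simp only: sum_divide_distrib)
    also have "\<dots> = (\<Sum>i<m. indicator B (Z i \<omega>)) / m"
      by (rule arg_cong[where f = "\<lambda>t. t / real m"], rule sum.cong) (simp_all add: row)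
    also have "ennreal \<dots> = ennreal (\<Sum>i<m. indicator B (Z i \<omega>)) / ennreal m"
      using m by (subst divide_ennreal) (auto intro!: sum_nonneg)
    also have "\<dots> = (\<Sum>i<m. indicator (Z i -` B \<inter> space R) \<omega>) / of_nat m"
    proof -
      have "ennreal (\<Sum>i<m. indicator B (Z i \<omega>)) = (\<Sum>i<m. ennreal (indicator B (Z i \<omega>)))"
        by (rule sum_ennreal[symmetric]) simp
      also have "\<dots> = (\<Sum>i<m. indicator (Z i -` B \<inter> space R) \<omega>)"
        using \<omega> by (intro sum.cong) (auto simp: indicator_def)
      finally show ?thesis by (metis ennreal_of_nat_eq_real_of_nat)
    qed
    finally show "ennreal (\<Sum>i<m. \<Sum>x\<in>X. w \<omega> i x / m * indicator B (Z i \<omega>))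
        = (\<Sum>i<m. indicator (Z i -` B \<inter> space R) \<omega>) / of_nat m" .
  qed
  also have "\<dots> = (\<integral>\<^sup>+\<omega>. (\<Sum>i<m. indicator (Z i -` B \<inter> space R) \<omega>) \<partial>R) / of_nat m"
    using B Z by (subst nn_integral_divide) auto
  also have "\<dots> = (\<Sum>i<m. emeasure R (Z i -` B \<inter> space R)) / m"
    using B Z by (subst nn_integral_sum) (auto simp: measurable_sets)
  finally show ?thesis .
qed

lemma W1_le_nn_integral_plan_cost:
  assumes \<nu>: "sets \<nu> = sets borel"
    and \<nu>_eq: "\<And>B. B \<in> sets borel \<Longrightarrow> emeasure \<nu> B = (\<Sum>i<m. emeasure R (Z i -` B \<inter> space R)) / m"
  shows "W1 P \<nu> \<le> (\<integral>\<^sup>+\<omega>. ennreal (plan_cost m (\<lambda>i. Z i \<omega>) (w \<omega>)) \<partial>R)"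
proof -
  have "distr (plan_coupling m R Z w) borel snd = \<nu>"
    using \<nu> \<nu>_eq by (intro measure_eqI) (simp_all add: emeasure_distr_plan_coupling_snd)
  then have "plan_coupling m R Z w \<in> couplings P \<nu>"
    by (simp add: couplings_def sets_plan_coupling distr_plan_coupling_fst)
  then have "W1 P \<nu> \<le> (\<integral>\<^sup>+z. ennreal (norm (fst z - snd z)) \<partial>plan_coupling m R Z w)"
    unfolding W1_def by (rule INF_lower)
  also have "\<dots> = (\<integral>\<^sup>+\<omega>. ennreal (plan_cost m (\<lambda>i. Z i \<omega>) (w \<omega>)) \<partial>R)"
    by (subst nn_integral_plan_coupling) (auto simp: plan_cost_def sum_divide_distrib)
  finally show ?thesis .
qed

end

lemma AE_sum_RN_deriv_coupling_slice:
  assumes \<nu>: "prob_space \<nu>" "sets \<nu> = sets borel" and \<pi>: "\<pi> \<in> couplings P \<nu>"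
  shows "AE y in \<nu>. (\<Sum>x\<in>X. RN_deriv \<nu> (coupling_slice \<pi> x) y) = 1"
proof -
  interpret \<nu>: prob_space \<nu> by (rule \<nu>(1))
  have \<nu>_measurable: "f \<in> borel_measurable \<nu> \<longleftrightarrow> f \<in> borel_measurable borel" for f :: "'a \<Rightarrow> ennreal"
    by (simp only: measurable_cong_sets[OF \<nu>(2) refl])
  have RN_measurable: "RN_deriv \<nu> (coupling_slice \<pi> x) \<in> borel_measurable borel" for x
    using borel_measurable_RN_deriv \<nu>_measurable by blast
  have rect: "{x} \<times> A \<in> sets \<pi>" if "A \<in> sets borel" for x A
    using that sets_coupling[OF \<pi>] by simp
  show ?thesis
  proof (rule \<nu>.density_unique2)
    show "(\<lambda>y. \<Sum>x\<in>X. RN_deriv \<nu> (coupling_slice \<pi> x) y) \<in> borel_measurable \<nu>"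
      using RN_measurable by (simp add: \<nu>_measurable)
    fix A assume "A \<in> sets \<nu>"
    then have A: "A \<in> sets borel" using \<nu>(2) by simp
    have "(\<integral>\<^sup>+y \<in> A. (\<Sum>x\<in>X. RN_deriv \<nu> (coupling_slice \<pi> x) y) \<partial>\<nu>)
        = (\<Sum>x\<in>X. \<integral>\<^sup>+y. RN_deriv \<nu> (coupling_slice \<pi> x) y * indicator A y \<partial>\<nu>)"
      using RN_measurable A by (subst nn_integral_sum[symmetric]) (auto simp: sum_distrib_right \<nu>_measurable)
    also have "\<dots> = (\<Sum>x\<in>X. emeasure \<pi> ({x} \<times> A))"
    proof (intro sum.cong refl)
      fix x
      have "(\<integral>\<^sup>+y. RN_deriv \<nu> (coupling_slice \<pi> x) y * indicator A y \<partial>\<nu>)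
          = (\<integral>\<^sup>+y. indicator A y \<partial>coupling_slice \<pi> x)"
        using A \<nu>(2)
        by (intro \<nu>.RN_deriv_nn_integral[symmetric] absolutely_continuous_coupling_slice[OF \<pi>])
          (simp_all add: \<nu>_measurable)
      also have "\<dots> = emeasure \<pi> ({x} \<times> A)"
        using A by (simp add: emeasure_coupling_slice[OF \<pi>])
      finally show "(\<integral>\<^sup>+y. RN_deriv \<nu> (coupling_slice \<pi> x) y * indicator A y \<partial>\<nu>)
          = emeasure \<pi> ({x} \<times> A)" .
    qed
    also have "\<dots> = emeasure \<pi> (\<Union>x\<in>X. {x} \<times> A)"
      using A finite_X by (intro sum_emeasure) (auto simp: disjoint_family_on_def rect)
    also have "(\<Union>x\<in>X. {x} \<times> A) = X \<times> A" by auto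
    also have "emeasure \<pi> (X \<times> A) = emeasure \<nu> A"
      using A by (simp add: emeasure_coupling_restrict_X[OF \<pi>] emeasure_coupling_snd[OF \<pi>])
    finally show "(\<integral>\<^sup>+y \<in> A. (\<Sum>x\<in>X. RN_deriv \<nu> (coupling_slice \<pi> x) y) \<partial>\<nu>) = (\<integral>\<^sup>+y \<in> A. 1 \<partial>\<nu>)"
      using \<open>A \<in> sets \<nu>\<close> by simp
  qed simp
qed

lemma coupling_kernel:
  assumes \<nu>: "prob_space \<nu>" "sets \<nu> = sets borel" and \<pi>: "\<pi> \<in> couplings P \<nu>"
  obtains k :: "'a \<Rightarrow> 'a \<Rightarrow> real" where
    "\<And>x. (\<lambda>y. k y x) \<in> borel_measurable borel"
    "\<And>y x. 0 \<le> k y x" "\<And>y. (\<Sum>x\<in>X. k y x) = 1"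
    "\<And>x. x \<in> X \<Longrightarrow> (\<integral>\<^sup>+y. ennreal (k y x) \<partial>\<nu>) = ennreal (mass x)"
    "(\<integral>\<^sup>+y. ennreal (\<Sum>x\<in>X. k y x * norm (x - y)) \<partial>\<nu>) \<le> (\<integral>\<^sup>+z. ennreal (norm (fst z - snd z)) \<partial>\<pi>)"
proof -
  interpret \<nu>: prob_space \<nu> by (rule \<nu>(1))
  define h where "h x = RN_deriv \<nu> (coupling_slice \<pi> x)" for x
  have h_measurable [measurable]: "h x \<in> borel_measurable borel" for x
    unfolding h_def by (subst measurable_cong_sets[OF \<nu>(2)[symmetric] refl]) (rule borel_measurable_RN_deriv)
  have h_finite: "h x y \<noteq> \<top>" if "(\<Sum>x'\<in>X. h x' y) = 1" and "x \<in> X" for x y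
  proof -
    have "h x y \<le> (\<Sum>x'\<in>X. h x' y)"
      using finite_X that(2) by (intro member_le_sum) auto
    then show ?thesis using that(1) by (auto simp: top_unique)
  qed
  text \<open>Off the null set where the densities do not sum to one, any probability vector will do.\<close>
  define k where "k y x = (if (\<Sum>x'\<in>X. h x' y) = 1 then enn2real (h x y) else mass x)" for y x
  have k_nonneg: "0 \<le> k y x" for y x by (simp add: k_def mass_nonneg)
  have k_eq_h: "AE y in \<nu>. \<forall>x\<in>X. ennreal (k y x) = h x y"
    using AE_sum_RN_deriv_coupling_slice[OF \<nu> \<pi>, folded h_def]
  proof eventually_elim
    case (elim y)
    then show ?case using h_finite[OF elim] by (simp add: k_def ennreal_enn2real_if)
  qed
  show ?thesis
  proof
    show "(\<lambda>y. k y x) \<in> borel_measurable borel" for x unfolding k_def by measurable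
    show "0 \<le> k y x" for y x by (rule k_nonneg)
    show "(\<Sum>x\<in>X. k y x) = 1" for y
    proof (cases "(\<Sum>x'\<in>X. h x' y) = 1")
      case True
      have "(\<Sum>x\<in>X. k y x) = (\<Sum>x\<in>X. enn2real (h x y))"
        using True by (simp add: k_def)
      also have "\<dots> = enn2real (\<Sum>x\<in>X. h x y)"
        using h_finite[OF True] by (subst enn2real_sum) (auto simp: top.not_eq_extremum)
      finally show ?thesis using True by simp
    qed (simp add: k_def sum_mass)
    show "(\<integral>\<^sup>+y. ennreal (k y x) \<partial>\<nu>) = ennreal (mass x)" if x: "x \<in> X" for x
    proof -
      have "(\<integral>\<^sup>+y. ennreal (k y x) \<partial>\<nu>) = (\<integral>\<^sup>+y. h x y * 1 \<partial>\<nu>)"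
        using k_eq_h x by (intro nn_integral_cong_AE) auto
      also have "\<dots> = (\<integral>\<^sup>+z. indicator ({x} \<times> UNIV) z * 1 \<partial>\<pi>)"
        unfolding h_def by (rule nn_integral_RN_deriv_coupling_slice[OF \<pi> \<nu>]) simp
      also have "\<dots> = emeasure \<pi> ({x} \<times> UNIV)"
        using sets_coupling[OF \<pi>] by simp
      also have "\<dots> = ennreal (mass x)"
        by (simp add: emeasure_coupling_fst[OF \<pi>] emeasure_singleton)
      finally show ?thesis .
    qed
    have "(\<integral>\<^sup>+y. ennreal (\<Sum>x\<in>X. k y x * norm (x - y)) \<partial>\<nu>)
        = (\<integral>\<^sup>+y. (\<Sum>x\<in>X. h x y * ennreal (norm (x - y))) \<partial>\<nu>)"
      using k_eq_h
      by (intro nn_integral_cong_AE, eventually_elim)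
        (simp add: k_nonneg ennreal_mult sum_ennreal[symmetric] cong: sum.cong)
    also have "\<dots> = (\<Sum>x\<in>X. \<integral>\<^sup>+y. h x y * ennreal (norm (x - y)) \<partial>\<nu>)"
      using h_measurable by (subst nn_integral_sum) (auto simp: measurable_cong_sets[OF \<nu>(2) refl])
    also have "\<dots> \<le> (\<integral>\<^sup>+z. ennreal (norm (fst z - snd z)) \<partial>\<pi>)"
      unfolding h_def by (rule sum_nn_integral_RN_deriv_cost_le[OF \<pi> \<nu> finite_X])
    finally show "(\<integral>\<^sup>+y. ennreal (\<Sum>x\<in>X. k y x * norm (x - y)) \<partial>\<nu>)
        \<le> (\<integral>\<^sup>+z. ennreal (norm (fst z - snd z)) \<partial>\<pi>)" .
  qed
qed

lemma diameter_nonneg: "0 \<le> diameter X"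
  using finite_X by (simp add: diameter_ge_0 finite_imp_bounded)

lemma norm_diff_le_diameter:
  assumes "x \<in> X" and "z \<in> X"
  shows "norm (x - y) \<le> norm (z - y) + diameter X"
proof -
  have "dist x z \<le> diameter X"
    using assms finite_X by (intro diameter_bounded_bound) (auto simp: finite_imp_bounded)
  then show ?thesis using norm_triangle_ineq[of "x - z" "z - y"] by (simp add: dist_norm)
qed

text \<open>Rebalancing a row-stochastic matrix \<open>K\<close> whose column means miss the masses: each
  overloaded column keeps only the fraction \<open>mass x / column_mean x\<close> of its entries, and the mass
  removed from a row is spread over the underloaded columns in proportion to their deficits.\<close>

context
  fixes m :: nat and K :: "nat \<Rightarrow> 'a \<Rightarrow> real"
begin

definition column_mean :: "'a \<Rightarrow> real" where
  "column_mean x = (\<Sum>i<m. K i x) / m"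

definition kept_fraction :: "'a \<Rightarrow> real" where
  "kept_fraction x = (if column_mean x \<le> mass x then 1 else mass x / column_mean x)"

definition deficit :: "'a \<Rightarrow> real" where
  "deficit x = max 0 (mass x - column_mean x)"

definition removed :: "nat \<Rightarrow> real" where
  "removed i = (\<Sum>x\<in>X. K i x * (1 - kept_fraction x))"

definition rebalanced_plan :: "nat \<Rightarrow> 'a \<Rightarrow> real" where
  "rebalanced_plan i x = K i x * kept_fraction x
     + (if (\<Sum>z\<in>X. deficit z) = 0 then 0 else removed i * deficit x / (\<Sum>z\<in>X. deficit z))"

end

context
  fixes m :: nat and K :: "nat \<Rightarrow> 'a \<Rightarrow> real"
  assumes m: "m \<ge> 1"
    and K_nonneg: "\<And>i x. i < m \<Longrightarrow> x \<in> X \<Longrightarrow> 0 \<le> K i x"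
    and K_row: "\<And>i. i < m \<Longrightarrow> (\<Sum>x\<in>X. K i x) = 1"
begin

lemma column_mean_nonneg: "x \<in> X \<Longrightarrow> 0 \<le> column_mean m K x"
  unfolding column_mean_def using K_nonneg by (auto intro!: sum_nonneg divide_nonneg_nonneg)

lemma kept_fraction_bounds: "x \<in> X \<Longrightarrow> 0 \<le> kept_fraction m K x \<and> kept_fraction m K x \<le> 1"
  using column_mean_nonneg[of x] mass_nonneg[of x]
  by (auto simp: kept_fraction_def divide_le_eq_1)

lemma column_mean_kept_fraction:
  "x \<in> X \<Longrightarrow> column_mean m K x * kept_fraction m K x = min (column_mean m K x) (mass x)"
  using column_mean_nonneg[of x] mass_nonneg[of x] by (auto simp: kept_fraction_def)

lemma deficit_nonneg: "0 \<le> deficit m K x"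
  by (simp add: deficit_def)

lemma removed_nonneg: "i < m \<Longrightarrow> 0 \<le> removed m K i"
  unfolding removed_def using K_nonneg kept_fraction_bounds by (auto intro!: sum_nonneg)

lemma sum_column_mean: "(\<Sum>x\<in>X. column_mean m K x) = 1"
proof -
  have "(\<Sum>x\<in>X. column_mean m K x) = (\<Sum>i<m. \<Sum>x\<in>X. K i x) / m"
    unfolding column_mean_def by (simp add: sum_divide_distrib[symmetric] sum.swap[of _ X])
  also have "\<dots> = 1" using K_row m by simp
  finally show ?thesis .
qed

lemma mean_removed: "(\<Sum>i<m. removed m K i) / m = (\<Sum>x\<in>X. deficit m K x)"
proof -
  have "(\<Sum>i<m. removed m K i) / m = (\<Sum>x\<in>X. column_mean m K x * (1 - kept_fraction m K x))"
    unfolding removed_def column_mean_def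
    by (simp add: sum_divide_distrib sum_distrib_right sum.swap[of _ X])
  also have "\<dots> = (\<Sum>x\<in>X. column_mean m K x - min (column_mean m K x) (mass x))"
    by (intro sum.cong refl) (simp add: right_diff_distrib column_mean_kept_fraction)
  also have "\<dots> = (\<Sum>x\<in>X. deficit m K x)"
  proof -
    have "(\<Sum>x\<in>X. column_mean m K x - min (column_mean m K x) (mass x)) - (\<Sum>x\<in>X. deficit m K x)
        = (\<Sum>x\<in>X. column_mean m K x) - (\<Sum>x\<in>X. mass x)"
      by (simp add: sum_subtractf[symmetric] deficit_def) (intro sum.cong refl; simp add: min_def max_def)
    then show ?thesis using sum_column_mean sum_mass by simp
  qed
  finally show ?thesis .
qed

lemma no_deficit:
  assumes "(\<Sum>z\<in>X. deficit m K z) = 0" and x: "x \<in> X"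
  shows "column_mean m K x = mass x" and "kept_fraction m K x = 1"
proof -
  have "\<forall>z\<in>X. deficit m K z = 0"
    using assms(1) finite_X deficit_nonneg by (simp add: sum_nonneg_eq_0_iff)
  then have le: "\<forall>z\<in>X. mass z \<le> column_mean m K z"
    by (auto simp: deficit_def max_def split: if_splits)
  have "(\<Sum>z\<in>X. column_mean m K z - mass z) = 0"
    using sum_column_mean sum_mass by (simp add: sum_subtractf)
  then have "\<forall>z\<in>X. column_mean m K z - mass z = 0"
    using finite_X le by (subst sum_nonneg_eq_0_iff[symmetric]) auto
  then show "column_mean m K x = mass x" "kept_fraction m K x = 1"
    using x by (auto simp: kept_fraction_def)
qed

lemma rebalanced_plan_in_transport_plans: "rebalanced_plan m K \<in> transport_plans m"
  unfolding transport_plans_def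
proof (intro CollectI conjI allI impI ballI)
  fix i x assume "i < m" "x \<in> X"
  then show "0 \<le> rebalanced_plan m K i x"
    unfolding rebalanced_plan_def
    using K_nonneg kept_fraction_bounds removed_nonneg deficit_nonneg
    by (auto intro!: add_nonneg_nonneg mult_nonneg_nonneg divide_nonneg_nonneg sum_nonneg)
next
  fix i assume i: "i < m"
  show "(\<Sum>x\<in>X. rebalanced_plan m K i x) = 1"
  proof (cases "(\<Sum>z\<in>X. deficit m K z) = 0")
    case True
    then have "(\<Sum>x\<in>X. rebalanced_plan m K i x) = (\<Sum>x\<in>X. K i x)"
      unfolding rebalanced_plan_def using no_deficit by (intro sum.cong) auto
    then show ?thesis using K_row i by simp
  next
    case False
    have "(\<Sum>x\<in>X. rebalanced_plan m K i x) = (\<Sum>x\<in>X. K i x * kept_fraction m K x) + removed m K i"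
      unfolding rebalanced_plan_def using False
      by (simp add: sum.distrib sum_distrib_left[symmetric] sum_divide_distrib[symmetric])
    also have "\<dots> = (\<Sum>x\<in>X. K i x)"
      unfolding removed_def by (simp add: sum.distrib[symmetric] right_diff_distrib)
    finally show ?thesis using K_row i by simp
  qed
next
  fix x assume x: "x \<in> X"
  define E where "E = (\<Sum>z\<in>X. deficit m K z)"
  show "(\<Sum>i<m. rebalanced_plan m K i x) / m = mass x"
  proof (cases "E = 0")
    case True
    then show ?thesis
      using no_deficit[OF _ x] by (simp add: rebalanced_plan_def column_mean_def E_def)
  next
    case False
    have "(\<Sum>i<m. rebalanced_plan m K i x) / m
        = column_mean m K x * kept_fraction m K x + (\<Sum>i<m. removed m K i) / m * deficit m K x / E"
      unfolding rebalanced_plan_def column_mean_def using False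
      by (simp add: E_def[symmetric] sum.distrib sum_distrib_right sum_divide_distrib[symmetric]
          add_divide_distrib)
    also have "\<dots> = min (column_mean m K x) (mass x) + deficit m K x"
      using False by (simp add: mean_removed column_mean_kept_fraction x E_def)
    also have "\<dots> = mass x"
      by (simp add: deficit_def min_def max_def)
    finally show ?thesis .
  qed
qed

lemma row_cost_rebalanced_plan:
  assumes i: "i < m"
  shows "(\<Sum>x\<in>X. rebalanced_plan m K i x * norm (x - y))
    \<le> (\<Sum>x\<in>X. K i x * norm (x - y)) + diameter X * removed m K i"
proof -
  define E where "E = (\<Sum>z\<in>X. deficit m K z)"
  define T where "T = (\<Sum>z\<in>X. K i z * (1 - kept_fraction m K z) * norm (z - y)) + diameter X * removed m K i"
  have split: "(\<Sum>x\<in>X. K i x * kept_fraction m K x * norm (x - y))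
      + (\<Sum>z\<in>X. K i z * (1 - kept_fraction m K z) * norm (z - y)) = (\<Sum>x\<in>X. K i x * norm (x - y))"
    by (simp add: sum.distrib[symmetric] algebra_simps)
  have moved: "removed m K i * norm (x - y) \<le> T" if x: "x \<in> X" for x
  proof -
    have "removed m K i * norm (x - y) = (\<Sum>z\<in>X. K i z * (1 - kept_fraction m K z) * norm (x - y))"
      unfolding removed_def by (simp add: sum_distrib_right)
    also have "\<dots> \<le> (\<Sum>z\<in>X. K i z * (1 - kept_fraction m K z) * (norm (z - y) + diameter X))"
      using K_nonneg[OF i] kept_fraction_bounds norm_diff_le_diameter[OF x]
      by (intro sum_mono mult_left_mono) (auto intro!: mult_nonneg_nonneg)
    also have "\<dots> = T"
      unfolding T_def removed_def
      by (simp add: distrib_left sum.distrib sum_distrib_left sum_distrib_right mult_ac)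
    finally show ?thesis .
  qed
  show ?thesis
  proof (cases "E = 0")
    case True
    then have "rebalanced_plan m K i x = K i x" if "x \<in> X" for x
      using no_deficit[OF _ that] by (simp add: rebalanced_plan_def E_def)
    then have "(\<Sum>x\<in>X. rebalanced_plan m K i x * norm (x - y)) = (\<Sum>x\<in>X. K i x * norm (x - y))"
      by (intro sum.cong) auto
    then show ?thesis using removed_nonneg[OF i] diameter_nonneg by simp
  next
    case False
    have "(\<Sum>x\<in>X. rebalanced_plan m K i x * norm (x - y))
        = (\<Sum>x\<in>X. K i x * kept_fraction m K x * norm (x - y)) + (\<Sum>x\<in>X. deficit m K x / E * (removed m K i * norm (x - y)))"
      using False by (simp add: rebalanced_plan_def E_def[symmetric] sum.distrib[symmetric] field_simps)
    also have "\<dots> \<le> (\<Sum>x\<in>X. K i x * kept_fraction m K x * norm (x - y)) + (\<Sum>x\<in>X. deficit m K x / E * T)"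
      using moved deficit_nonneg by (intro add_left_mono sum_mono mult_left_mono) (auto simp: E_def sum_nonneg)
    also have "(\<Sum>x\<in>X. deficit m K x / E * T) = T"
      using False by (simp add: E_def sum_distrib_right[symmetric] sum_divide_distrib[symmetric])
    finally show ?thesis using split by (simp add: T_def)
  qed
qed

lemma plan_cost_rebalanced_plan:
  "plan_cost m y (rebalanced_plan m K)
    \<le> (\<Sum>i<m. \<Sum>x\<in>X. K i x * norm (x - y i)) / m + diameter X * (\<Sum>x\<in>X. \<bar>column_mean m K x - mass x\<bar>)"
proof -
  have "(\<Sum>i<m. \<Sum>x\<in>X. rebalanced_plan m K i x * norm (x - y i))
      \<le> (\<Sum>i<m. (\<Sum>x\<in>X. K i x * norm (x - y i)) + diameter X * removed m K i)"
    by (intro sum_mono row_cost_rebalanced_plan) simp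
  also have "\<dots> = (\<Sum>i<m. \<Sum>x\<in>X. K i x * norm (x - y i)) + diameter X * (\<Sum>i<m. removed m K i)"
    by (simp add: sum.distrib sum_distrib_left)
  finally have "plan_cost m y (rebalanced_plan m K)
      \<le> ((\<Sum>i<m. \<Sum>x\<in>X. K i x * norm (x - y i)) + diameter X * (\<Sum>i<m. removed m K i)) / m"
    unfolding plan_cost_def using m by (intro divide_right_mono) auto
  also have "\<dots> = (\<Sum>i<m. \<Sum>x\<in>X. K i x * norm (x - y i)) / m + diameter X * (\<Sum>x\<in>X. deficit m K x)"
    by (simp add: add_divide_distrib mean_removed[symmetric])
  also have "(\<Sum>x\<in>X. deficit m K x) \<le> (\<Sum>x\<in>X. \<bar>column_mean m K x - mass x\<bar>)"
    unfolding deficit_def by (intro sum_mono) auto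
  finally show ?thesis
    using diameter_nonneg by (simp add: mult_left_mono)
qed

end

lemma W1_empirical_le_plan_cost:
  assumes m: "m \<ge> 1" and w: "w \<in> transport_plans m"
  shows "W1 P (empirical m y) \<le> ennreal (plan_cost m y w)"
proof -
  define R where "R = measure_pmf (return_pmf ())"
  have R: "prob_space R" unfolding R_def by (rule measure_pmf.prob_space_axioms)
  have "emeasure R ((\<lambda>_. y i) -` B \<inter> space R) = indicator B (y i)" for B i
    by (cases "y i \<in> B") (simp_all add: R_def measure_pmf.emeasure_space_1)
  then have "W1 P (empirical m y) \<le> (\<integral>\<^sup>+\<omega>. ennreal (plan_cost m (\<lambda>i. y i) w) \<partial>R)"
    using w m by (intro W1_le_nn_integral_plan_cost[OF R m]) (simp_all add: emeasure_empirical)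
  also have "\<dots> = ennreal (plan_cost m y w)"
    by (simp add: R_def measure_pmf.emeasure_space_1)
  finally show ?thesis .
qed

lemma plan_cost_le_coupling_cost:
  assumes m: "m \<ge> 1" and \<pi>: "\<pi> \<in> couplings P (empirical m y)"
  obtains w where "w \<in> transport_plans m"
    and "ennreal (plan_cost m y w) \<le> (\<integral>\<^sup>+z. ennreal (norm (fst z - snd z)) \<partial>\<pi>)"
proof -
  obtain k where k_measurable: "\<And>x. (\<lambda>z. k z x) \<in> borel_measurable borel"
    and k_nonneg: "\<And>z x. 0 \<le> k z x" and k_row: "\<And>z. (\<Sum>x\<in>X. k z x) = 1"
    and k_mass: "\<And>x. x \<in> X \<Longrightarrow> (\<integral>\<^sup>+z. ennreal (k z x) \<partial>empirical m y) = ennreal (mass x)"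
    and k_cost: "(\<integral>\<^sup>+z. ennreal (\<Sum>x\<in>X. k z x * norm (x - z)) \<partial>empirical m y)
      \<le> (\<integral>\<^sup>+z. ennreal (norm (fst z - snd z)) \<partial>\<pi>)"
    using coupling_kernel[OF prob_space_empirical[OF m] sets_empirical \<pi>] by blast
  define w where "w i x = k (y i) x" for i x
  have mean: "ennreal (\<Sum>i<m. f i) / of_nat m = ennreal ((\<Sum>i<m. f i) / m)"
    if "\<And>i. 0 \<le> f i" for f :: "nat \<Rightarrow> real"
  proof -
    have "ennreal (\<Sum>i<m. f i) / of_nat m = ennreal (\<Sum>i<m. f i) / ennreal (real m)"
      by (simp add: ennreal_of_nat_eq_real_of_nat)
    also have "\<dots> = ennreal ((\<Sum>i<m. f i) / m)"
      using that m by (intro divide_ennreal sum_nonneg) auto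
    finally show ?thesis .
  qed
  have "w \<in> transport_plans m"
    unfolding transport_plans_def
  proof (intro CollectI conjI allI impI ballI)
    show "0 \<le> w i x" for i x by (simp add: w_def k_nonneg)
    show "(\<Sum>x\<in>X. w i x) = 1" for i by (simp add: w_def k_row)
    fix x assume x: "x \<in> X"
    have "ennreal ((\<Sum>i<m. w i x) / m) = (\<integral>\<^sup>+z. ennreal (k z x) \<partial>empirical m y)"
      using m k_measurable k_nonneg by (simp add: nn_integral_empirical mean w_def)
    then have "ennreal ((\<Sum>i<m. w i x) / m) = ennreal (mass x)"
      using k_mass[OF x] by simp
    then show "(\<Sum>i<m. w i x) / m = mass x"
      using k_nonneg mass_nonneg by (simp add: ennreal_inj sum_nonneg w_def)
  qed
  moreover have "ennreal (plan_cost m y w) = (\<integral>\<^sup>+z. ennreal (\<Sum>x\<in>X. k z x * norm (x - z)) \<partial>empirical m y)"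
    using m k_measurable k_nonneg
    by (simp add: nn_integral_empirical plan_cost_def w_def mean sum_nonneg)
  ultimately show ?thesis using k_cost that by simp
qed

definition W1_sample :: "nat \<Rightarrow> (nat \<Rightarrow> 'a) \<Rightarrow> real" where
  "W1_sample m y = enn2real (W1 P (empirical m y))"

lemma W1_sample_nonneg: "0 \<le> W1_sample m y"
  by (simp add: W1_sample_def)

lemma W1_empirical_eq:
  assumes m: "m \<ge> 1"
  shows "W1 P (empirical m y) = ennreal (W1_sample m y)"
proof -
  have "W1 P (empirical m y) \<noteq> \<top>"
    using W1_empirical_le_plan_cost[OF m product_plan[OF m], of y] by (auto simp: top_unique)
  then show ?thesis by (simp add: W1_sample_def ennreal_enn2real_if)
qed

lemma W1_sample_le_plan_cost:
  "m \<ge> 1 \<Longrightarrow> w \<in> transport_plans m \<Longrightarrow> W1_sample m y \<le> plan_cost m y w"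
  using W1_empirical_le_plan_cost[of m w y] W1_empirical_eq[of m y] plan_cost_nonneg[of w m y]
  by (simp add: ennreal_le_iff)

lemma exists_plan_cost_less:
  assumes m: "m \<ge> 1" and \<epsilon>: "\<epsilon> > 0"
  obtains w where "w \<in> transport_plans m" and "plan_cost m y w < W1_sample m y + \<epsilon>"
proof -
  have "W1 P (empirical m y) < ennreal (W1_sample m y + \<epsilon>)"
    using W1_empirical_eq[OF m] \<epsilon> W1_sample_nonneg[of m y] by (simp add: ennreal_lessI)
  then obtain \<pi> where \<pi>: "\<pi> \<in> couplings P (empirical m y)"
    and less: "(\<integral>\<^sup>+z. ennreal (norm (fst z - snd z)) \<partial>\<pi>) < ennreal (W1_sample m y + \<epsilon>)"
    unfolding W1_def by (auto simp: INF_less_iff)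
  obtain w where w: "w \<in> transport_plans m"
    and le: "ennreal (plan_cost m y w) \<le> (\<integral>\<^sup>+z. ennreal (norm (fst z - snd z)) \<partial>\<pi>)"
    using plan_cost_le_coupling_cost[OF m \<pi>] by blast
  have "plan_cost m y w < W1_sample m y + \<epsilon>"
    using le less plan_cost_nonneg[OF w] by (simp add: ennreal_less_iff[symmetric] del: ennreal_less_iff)
  then show ?thesis using w that by blast
qed

lemma plan_cost_le_plan_cost_add:
  assumes w: "w \<in> transport_plans m"
  shows "plan_cost m y w \<le> plan_cost m z w + sample_dist m y z / m"
proof -
  have "(\<Sum>x\<in>X. w i x * norm (x - y i)) \<le> (\<Sum>x\<in>X. w i x * norm (x - z i)) + norm (y i - z i)"
    if i: "i < m" for i
  proof -
    have "(\<Sum>x\<in>X. w i x * norm (x - y i)) \<le> (\<Sum>x\<in>X. w i x * (norm (x - z i) + norm (y i - z i)))"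
      using w i norm_triangle_ineq4[of "x - z i" "y i - z i" for x]
      by (intro sum_mono mult_left_mono) (auto simp: transport_plans_def)
    also have "\<dots> = (\<Sum>x\<in>X. w i x * norm (x - z i)) + norm (y i - z i)"
      using w i by (simp add: distrib_left sum.distrib sum_distrib_right[symmetric] transport_plans_def)
    finally show ?thesis .
  qed
  then have "(\<Sum>i<m. \<Sum>x\<in>X. w i x * norm (x - y i))
      \<le> (\<Sum>i<m. \<Sum>x\<in>X. w i x * norm (x - z i)) + sample_dist m y z"
    unfolding sample_dist_def sum.distrib[symmetric] by (intro sum_mono) auto
  then show ?thesis
    unfolding plan_cost_def add_divide_distrib[symmetric] by (intro divide_right_mono) auto
qed

lemma W1_sample_le_W1_sample_add:
  assumes m: "m \<ge> 1"
  shows "W1_sample m y \<le> W1_sample m z + sample_dist m y z / m"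
proof (rule field_le_epsilon)
  fix \<epsilon> :: real assume \<epsilon>: "\<epsilon> > 0"
  obtain w where w: "w \<in> transport_plans m" and less: "plan_cost m z w < W1_sample m z + \<epsilon>"
    using exists_plan_cost_less[OF m \<epsilon>] by blast
  have "W1_sample m y \<le> plan_cost m y w" by (rule W1_sample_le_plan_cost[OF m w])
  also have "\<dots> \<le> plan_cost m z w + sample_dist m y z / m" by (rule plan_cost_le_plan_cost_add[OF w])
  finally show "W1_sample m y \<le> W1_sample m z + sample_dist m y z / m + \<epsilon>" using less by simp
qed

lemma W1_sample_less_iff:
  assumes m: "m \<ge> 1" and g: "\<And>y \<delta>. \<delta> > 0 \<Longrightarrow> \<exists>n. sample_dist m y (g n) < \<delta>"
  shows "W1_sample m y < t \<longleftrightarrow> (\<exists>n. W1_sample m (g n) + sample_dist m y (g n) / m < t)"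
proof
  assume "\<exists>n. W1_sample m (g n) + sample_dist m y (g n) / m < t"
  then show "W1_sample m y < t"
    using W1_sample_le_W1_sample_add[OF m, of y] by (meson le_less_trans)
next
  assume less: "W1_sample m y < t"
  obtain n where n: "sample_dist m y (g n) < (t - W1_sample m y) / 2"
    using g[of "(t - W1_sample m y) / 2" y] less by auto
  have "sample_dist m y (g n) / m \<le> sample_dist m y (g n)"
    using m sample_dist_nonneg[of m y "g n"] by (simp add: divide_le_eq mult_le_cancel_left1)
  moreover have "W1_sample m (g n) \<le> W1_sample m y + sample_dist m y (g n) / m"
    using W1_sample_le_W1_sample_add[OF m, of "g n" y] by (simp add: sample_dist_commute)
  ultimately have "W1_sample m (g n) + sample_dist m y (g n) / m \<le> W1_sample m y + 2 * sample_dist m y (g n)"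
    by linarith
  also have "\<dots> < t" using n by (simp add: field_simps)
  finally have "W1_sample m (g n) + sample_dist m y (g n) / m < t" .
  then show "\<exists>n. W1_sample m (g n) + sample_dist m y (g n) / m < t" ..
qed

context
  fixes M :: "'b measure" and Z :: "nat \<Rightarrow> 'b \<Rightarrow> 'a" and m :: nat
  assumes m: "m \<ge> 1" and Z: "\<And>i. i < m \<Longrightarrow> Z i \<in> borel_measurable M"
begin

lemma borel_measurable_grid_bound:
  "(\<lambda>\<omega>. W1_sample m y + sample_dist m (\<lambda>i. Z i \<omega>) y / m) \<in> borel_measurable M"
  using borel_measurable_sample_dist[OF Z] by (intro borel_measurable_add borel_measurable_divide) auto

lemma borel_measurable_W1_sample: "(\<lambda>\<omega>. W1_sample m (\<lambda>i. Z i \<omega>)) \<in> borel_measurable M"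
proof -
  obtain g :: "nat \<Rightarrow> nat \<Rightarrow> 'a" where g: "\<And>y \<delta>. \<delta> > 0 \<Longrightarrow> \<exists>n. sample_dist m y (g n) < \<delta>"
    using dense_samples[where m = m] by blast
  have "{\<omega> \<in> space M. W1_sample m (\<lambda>i. Z i \<omega>) < t}
      = (\<Union>n. {\<omega> \<in> space M. W1_sample m (g n) + sample_dist m (\<lambda>i. Z i \<omega>) (g n) / m < t})" for t
    using W1_sample_less_iff[OF m g] by blast
  moreover have "{\<omega> \<in> space M. W1_sample m (g n) + sample_dist m (\<lambda>i. Z i \<omega>) (g n) / m < t} \<in> sets M"
    for n t
    using borel_measurable_grid_bound[of "g n"] unfolding borel_measurable_iff_less by blast
  ultimately show ?thesis
    unfolding borel_measurable_iff_less by auto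
qed

text \<open>Near-optimal plans are first fixed for the countably many grid points; each sample then uses
  the plan of the first grid point close enough to it, which is a measurable choice.\<close>

lemma measurable_near_optimal_plans:
  assumes \<epsilon>: "\<epsilon> > 0"
  obtains w :: "'b \<Rightarrow> nat \<Rightarrow> 'a \<Rightarrow> real" where
    "\<And>i x. (\<lambda>\<omega>. w \<omega> i x) \<in> borel_measurable M" and "\<And>\<omega>. w \<omega> \<in> transport_plans m"
    and "\<And>\<omega>. plan_cost m (\<lambda>i. Z i \<omega>) (w \<omega>) \<le> W1_sample m (\<lambda>i. Z i \<omega>) + 2 * \<epsilon>"
proof -
  obtain g :: "nat \<Rightarrow> nat \<Rightarrow> 'a" where g: "\<And>y \<delta>. \<delta> > 0 \<Longrightarrow> \<exists>n. sample_dist m y (g n) < \<delta>"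
    using dense_samples[where m = m] by blast
  define v where
    "v n = (SOME w. w \<in> transport_plans m \<and> plan_cost m (g n) w < W1_sample m (g n) + \<epsilon>)" for n
  have v: "v n \<in> transport_plans m \<and> plan_cost m (g n) (v n) < W1_sample m (g n) + \<epsilon>" for n
  proof -
    have "\<exists>w. w \<in> transport_plans m \<and> plan_cost m (g n) w < W1_sample m (g n) + \<epsilon>"
      by (rule exists_plan_cost_less[OF m \<epsilon>]) blast
    then show ?thesis unfolding v_def by (rule someI_ex)
  qed
  define close where "close n \<omega> \<longleftrightarrow>
    W1_sample m (g n) + sample_dist m (\<lambda>i. Z i \<omega>) (g n) / m < W1_sample m (\<lambda>i. Z i \<omega>) + \<epsilon>" for n \<omega>
  define N where "N \<omega> = (LEAST n. close n \<omega>)" for \<omega>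
  have close_N: "close (N \<omega>) \<omega>" for \<omega>
  proof -
    have "\<exists>n. close n \<omega>"
      using W1_sample_less_iff[OF m g, of "\<lambda>i. Z i \<omega>" "W1_sample m (\<lambda>i. Z i \<omega>) + \<epsilon>"] \<epsilon>
      by (simp add: close_def)
    then show ?thesis unfolding N_def by (rule LeastI_ex)
  qed
  have "Measurable.pred M (close n)" for n
    unfolding close_def
    by (rule borel_measurable_pred_less[OF borel_measurable_grid_bound
          borel_measurable_add[OF borel_measurable_W1_sample borel_measurable_const]])
  then have N: "N \<in> measurable M (count_space UNIV)"
    unfolding N_def by (rule measurable_Least)
  show ?thesis
  proof
    show "(\<lambda>\<omega>. v (N \<omega>) i x) \<in> borel_measurable M" for i x
      by (rule measurable_compose_countable[OF _ N]) simp
    show "v (N \<omega>) \<in> transport_plans m" for \<omega>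
      using v by blast
    show "plan_cost m (\<lambda>i. Z i \<omega>) (v (N \<omega>)) \<le> W1_sample m (\<lambda>i. Z i \<omega>) + 2 * \<epsilon>" for \<omega>
    proof -
      have "plan_cost m (\<lambda>i. Z i \<omega>) (v (N \<omega>))
          \<le> plan_cost m (g (N \<omega>)) (v (N \<omega>)) + sample_dist m (\<lambda>i. Z i \<omega>) (g (N \<omega>)) / m"
        using v by (intro plan_cost_le_plan_cost_add) blast
      also have "\<dots> \<le> W1_sample m (\<lambda>i. Z i \<omega>) + 2 * \<epsilon>"
        using v[of "N \<omega>"] close_N[of \<omega>] by (simp add: close_def)
      finally show ?thesis .
    qed
  qed
qed

end

end

locale empirical_transport = semidiscrete_transport X P
  for X :: "'a::euclidean_space set" and P +
  fixes Q :: "'a measure" and M :: "'b measure" and Y :: "nat \<Rightarrow> 'b \<Rightarrow> 'a" and m :: nat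
  assumes prob_Q: "prob_space Q" and sets_Q: "sets Q = sets borel"
    and Q_square: "integrable Q (\<lambda>y. (norm y)\<^sup>2)"
    and prob_M: "prob_space M" and m: "m \<ge> 1"
    and Y_rv: "\<And>i. i < m \<Longrightarrow> Y i \<in> borel_measurable M"
    and Y_dist: "\<And>i. i < m \<Longrightarrow> distr M borel (Y i) = Q"
    and Y_indep: "prob_space.indep_vars M (\<lambda>_. borel) Y {..<m}"
begin

abbreviation W1_Y :: "'b \<Rightarrow> real" where
  "W1_Y \<omega> \<equiv> W1_sample m (\<lambda>i. Y i \<omega>)"

lemma measurable_Q_iff: "f \<in> borel_measurable Q \<longleftrightarrow> f \<in> borel_measurable borel"
  by (simp only: measurable_cong_sets[OF sets_Q refl])

lemma integral_Y:
  fixes h :: "'a \<Rightarrow> real"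
  assumes i: "i < m" and h: "integrable Q h" "h \<in> borel_measurable borel"
  shows "integrable M (\<lambda>\<omega>. h (Y i \<omega>))" and "(\<integral>\<omega>. h (Y i \<omega>) \<partial>M) = (\<integral>y. h y \<partial>Q)"
  using h Y_rv[OF i] Y_dist[OF i] by (auto simp: integrable_distr_eq[symmetric] integral_distr)

lemma integrable_norm_diff: "integrable Q (\<lambda>y. norm (x - y))"
proof (rule Bochner_Integration.integrable_bound)
  interpret Q: prob_space Q by (rule prob_Q)
  have "integrable Q (\<lambda>y. norm y)"
    by (rule Q.square_integrable_imp_integrable) (simp_all add: measurable_Q_iff Q_square)
  then show "integrable Q (\<lambda>y. norm x + norm y)" by simp
  show "(\<lambda>y. norm (x - y)) \<in> borel_measurable Q" by (simp add: measurable_Q_iff)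
  show "AE y in Q. norm (norm (x - y)) \<le> norm (norm x + norm y)"
    by (simp add: norm_triangle_ineq4)
qed

lemma integrable_W1_Y: "integrable M W1_Y"
proof (rule Bochner_Integration.integrable_bound)
  show "integrable M (\<lambda>\<omega>. plan_cost m (\<lambda>i. Y i \<omega>) (\<lambda>i x. mass x))"
    unfolding plan_cost_def using integral_Y(1)[OF _ integrable_norm_diff]
    by (auto intro!: Bochner_Integration.integrable_sum)
  show "W1_Y \<in> borel_measurable M"
    by (rule borel_measurable_W1_sample[OF m Y_rv])
  show "AE \<omega> in M. norm (W1_Y \<omega>) \<le> norm (plan_cost m (\<lambda>i. Y i \<omega>) (\<lambda>i x. mass x))"
    using W1_sample_le_plan_cost[OF m product_plan[OF m]] W1_sample_nonneg
    by (intro AE_I2) (auto intro: order_trans[OF _ abs_ge_self])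
qed

lemma W1_le_expectation_add:
  assumes \<epsilon>: "\<epsilon> > 0"
  shows "W1 P Q \<le> ennreal ((\<integral>\<omega>. W1_Y \<omega> \<partial>M) + 2 * \<epsilon>)"
proof -
  interpret M: prob_space M by (rule prob_M)
  obtain w where w_measurable: "\<And>i x. (\<lambda>\<omega>. w \<omega> i x) \<in> borel_measurable M"
    and w_plan: "\<And>\<omega>. w \<omega> \<in> transport_plans m"
    and w_cost: "\<And>\<omega>. plan_cost m (\<lambda>i. Y i \<omega>) (w \<omega>) \<le> W1_Y \<omega> + 2 * \<epsilon>"
    using measurable_near_optimal_plans[where M = M and Z = Y, OF m Y_rv \<epsilon>] by blast
  have Q_eq: "emeasure Q B = (\<Sum>i<m. emeasure M (Y i -` B \<inter> space M)) / m" if B: "B \<in> sets borel" for B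
  proof -
    have "emeasure M (Y i -` B \<inter> space M) = emeasure Q B" if "i < m" for i
      using Y_dist[OF that] Y_rv[OF that] B by (metis emeasure_distr)
    then have "(\<Sum>i<m. emeasure M (Y i -` B \<inter> space M)) = emeasure Q B * of_nat m"
      by (simp add: mult.commute)
    then show ?thesis using m by (simp add: mult_divide_eq_ennreal)
  qed
  have "W1 P Q \<le> (\<integral>\<^sup>+\<omega>. ennreal (plan_cost m (\<lambda>i. Y i \<omega>) (w \<omega>)) \<partial>M)"
    by (rule W1_le_nn_integral_plan_cost[OF prob_M m Y_rv w_measurable w_plan sets_Q Q_eq])
  also have "\<dots> \<le> (\<integral>\<^sup>+\<omega>. ennreal (W1_Y \<omega> + 2 * \<epsilon>) \<partial>M)"
    using w_cost by (intro nn_integral_mono) (simp add: ennreal_leI)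
  also have "\<dots> = ennreal (\<integral>\<omega>. W1_Y \<omega> + 2 * \<epsilon> \<partial>M)"
    using integrable_W1_Y W1_sample_nonneg \<epsilon>
    by (intro nn_integral_eq_integral) (auto intro!: add_nonneg_nonneg)
  also have "\<dots> = ennreal ((\<integral>\<omega>. W1_Y \<omega> \<partial>M) + 2 * \<epsilon>)"
    using integrable_W1_Y by (simp add: M.prob_space)
  finally show ?thesis .
qed

lemma W1_finite: "W1 P Q = ennreal (enn2real (W1 P Q))"
proof -
  have "W1 P Q \<noteq> \<top>" using W1_le_expectation_add[of 1] by (auto simp: top_unique)
  then show ?thesis by (simp add: ennreal_enn2real_if)
qed

lemma W1_le_expectation: "enn2real (W1 P Q) \<le> (\<integral>\<omega>. W1_Y \<omega> \<partial>M)"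
proof (rule field_le_epsilon)
  fix \<epsilon> :: real assume \<epsilon>: "\<epsilon> > 0"
  have "0 \<le> (\<integral>\<omega>. W1_Y \<omega> \<partial>M)" by (simp add: W1_sample_nonneg)
  moreover have "W1 P Q \<le> ennreal ((\<integral>\<omega>. W1_Y \<omega> \<partial>M) + \<epsilon>)"
    using W1_le_expectation_add[of "\<epsilon> / 2"] \<epsilon> by simp
  then have "enn2real (W1 P Q) \<le> enn2real (ennreal ((\<integral>\<omega>. W1_Y \<omega> \<partial>M) + \<epsilon>))"
    by (intro enn2real_mono) (simp_all del: ennreal_plus)
  ultimately show "enn2real (W1 P Q) \<le> (\<integral>\<omega>. W1_Y \<omega> \<partial>M) + \<epsilon>"
    using \<epsilon> by (simp del: ennreal_plus)
qed

definition kernel_cost :: "('a \<Rightarrow> 'a \<Rightarrow> real) \<Rightarrow> 'a \<Rightarrow> real" where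
  "kernel_cost k y = (\<Sum>x\<in>X. k y x * norm (x - y))"

context
  fixes k :: "'a \<Rightarrow> 'a \<Rightarrow> real"
  assumes k_measurable: "\<And>x. (\<lambda>y. k y x) \<in> borel_measurable borel"
    and k_nonneg: "\<And>y x. 0 \<le> k y x" and k_row: "\<And>y. (\<Sum>x\<in>X. k y x) = 1"
    and k_mass: "\<And>x. x \<in> X \<Longrightarrow> (\<integral>\<^sup>+y. ennreal (k y x) \<partial>Q) = ennreal (mass x)"
begin

lemma kernel_le_1: "x \<in> X \<Longrightarrow> k y x \<le> 1"
  using member_le_sum[of x X "k y"] finite_X k_nonneg k_row[of y] by simp

lemma borel_measurable_kernel_cost: "kernel_cost k \<in> borel_measurable borel"
  unfolding kernel_cost_def using k_measurable by (intro borel_measurable_sum) auto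

lemma kernel_cost_nonneg: "0 \<le> kernel_cost k y"
  unfolding kernel_cost_def using k_nonneg by (auto intro!: sum_nonneg)

lemma kernel_cost_bound:
  assumes x0: "x0 \<in> X"
  shows "\<bar>kernel_cost k y - norm x0\<bar> \<le> norm y + diameter X"
proof -
  have near: "norm x0 - norm y - diameter X \<le> norm (x - y) \<and> norm (x - y) \<le> norm x0 + norm y + diameter X"
    if x: "x \<in> X" for x
    using norm_diff_le_diameter[OF x x0, of y] norm_diff_le_diameter[OF x0 x, of y]
      norm_triangle_ineq2[of x0 y] norm_triangle_ineq4[of x0 y] by auto
  have "(\<Sum>x\<in>X. k y x * (norm x0 - norm y - diameter X)) \<le> kernel_cost k y"
    unfolding kernel_cost_def using near k_nonneg by (intro sum_mono mult_left_mono) auto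
  moreover have "kernel_cost k y \<le> (\<Sum>x\<in>X. k y x * (norm x0 + norm y + diameter X))"
    unfolding kernel_cost_def using near k_nonneg by (intro sum_mono mult_left_mono) auto
  ultimately show ?thesis
    by (simp add: sum_distrib_right[symmetric] k_row abs_le_iff)
qed

lemma centered_kernel_cost_square_le:
  assumes x0: "x0 \<in> X"
  shows "(kernel_cost k y - norm x0)\<^sup>2 \<le> 2 * (norm y)\<^sup>2 + 2 * (diameter X)\<^sup>2"
proof -
  have "\<bar>kernel_cost k y - norm x0\<bar>\<^sup>2 \<le> (norm y + diameter X)\<^sup>2"
    using kernel_cost_bound[OF x0] by (rule power_mono) simp
  moreover have "0 \<le> (norm y - diameter X)\<^sup>2" by simp
  ultimately show ?thesis
    by (simp add: power2_eq_square algebra_simps)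
qed

lemma integrable_kernel_cost: "integrable Q (kernel_cost k)"
proof (rule Bochner_Integration.integrable_bound)
  show "integrable Q (\<lambda>y. \<Sum>x\<in>X. norm (x - y))"
    using integrable_norm_diff by auto
  show "kernel_cost k \<in> borel_measurable Q"
    by (simp add: measurable_Q_iff borel_measurable_kernel_cost)
  have "kernel_cost k y \<le> (\<Sum>x\<in>X. norm (x - y))" for y
    unfolding kernel_cost_def using kernel_le_1 k_nonneg
    by (intro sum_mono) (auto intro: mult_left_le_one_le)
  then show "AE y in Q. norm (kernel_cost k y) \<le> norm (\<Sum>x\<in>X. norm (x - y))"
    using kernel_cost_nonneg by (intro AE_I2) (simp add: sum_nonneg)
qed

lemma W1_Y_le_kernel_cost:
  "W1_Y \<omega> \<le> (\<Sum>i<m. kernel_cost k (Y i \<omega>)) / m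
     + diameter X * (\<Sum>x\<in>X. \<bar>(\<Sum>i<m. k (Y i \<omega>) x) / m - mass x\<bar>)"
proof -
  let ?K = "\<lambda>i x. k (Y i \<omega>) x"
  have "W1_Y \<omega> \<le> plan_cost m (\<lambda>i. Y i \<omega>) (rebalanced_plan m ?K)"
    using k_nonneg k_row
    by (intro W1_sample_le_plan_cost[OF m] rebalanced_plan_in_transport_plans[OF m]) auto
  also have "\<dots> \<le> (\<Sum>i<m. \<Sum>x\<in>X. ?K i x * norm (x - Y i \<omega>)) / m
      + diameter X * (\<Sum>x\<in>X. \<bar>column_mean m ?K x - mass x\<bar>)"
    using k_nonneg k_row by (intro plan_cost_rebalanced_plan[OF m]) auto
  finally show ?thesis by (simp add: kernel_cost_def column_mean_def)
qed

lemma expectation_abs_mean_kernel_cost: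
  shows "integrable M (\<lambda>\<omega>. \<bar>(\<Sum>i<m. kernel_cost k (Y i \<omega>)) / m - (\<integral>y. kernel_cost k y \<partial>Q)\<bar>)"
    and "(\<integral>\<omega>. \<bar>(\<Sum>i<m. kernel_cost k (Y i \<omega>)) / m - (\<integral>y. kernel_cost k y \<partial>Q)\<bar> \<partial>M)
      \<le> sqrt ((2 * (\<integral>y. (norm y)\<^sup>2 \<partial>Q) + 2 * (diameter X)\<^sup>2) / m)"
proof -
  interpret M: prob_space M by (rule prob_M)
  interpret Q: prob_space Q by (rule prob_Q)
  obtain x0 where x0: "x0 \<in> X" using X_nonempty by blast
  text \<open>Centering at \<open>norm x0\<close> makes the square of the cost integrable with a bound in terms of
    the second moment of \<open>Q\<close>.\<close>
  define f where "f y = kernel_cost k y - norm x0" for y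
  have f_measurable: "f \<in> borel_measurable borel"
    unfolding f_def using borel_measurable_kernel_cost by simp
  have f_square: "(f y)\<^sup>2 \<le> 2 * (norm y)\<^sup>2 + 2 * (diameter X)\<^sup>2" for y
    unfolding f_def by (rule centered_kernel_cost_square_le[OF x0])
  have f2: "integrable Q (\<lambda>y. (f y)\<^sup>2)"
  proof (rule Bochner_Integration.integrable_bound)
    show "integrable Q (\<lambda>y. 2 * (norm y)\<^sup>2 + 2 * (diameter X)\<^sup>2)" using Q_square by simp
    show "(\<lambda>y. (f y)\<^sup>2) \<in> borel_measurable Q" using f_measurable by (simp add: measurable_Q_iff)
    show "AE y in Q. norm ((f y)\<^sup>2) \<le> norm (2 * (norm y)\<^sup>2 + 2 * (diameter X)\<^sup>2)"
      using f_square by (intro AE_I2) simp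
  qed
  have "(\<integral>y. (f y)\<^sup>2 \<partial>Q) \<le> (\<integral>y. 2 * (norm y)\<^sup>2 + 2 * (diameter X)\<^sup>2 \<partial>Q)"
    using f2 Q_square f_square by (intro integral_mono) simp_all
  also have "\<dots> = 2 * (\<integral>y. (norm y)\<^sup>2 \<partial>Q) + 2 * (diameter X)\<^sup>2"
    using Q_square by (simp add: Q.prob_space)
  finally have f2_bound: "(\<integral>y. (f y)\<^sup>2 \<partial>Q) \<le> 2 * (\<integral>y. (norm y)\<^sup>2 \<partial>Q) + 2 * (diameter X)\<^sup>2" .
  have shift: "(\<Sum>i<m. f (Y i \<omega>)) / m - (\<integral>y. f y \<partial>Q)
      = (\<Sum>i<m. kernel_cost k (Y i \<omega>)) / m - (\<integral>y. kernel_cost k y \<partial>Q)" for \<omega>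
  proof -
    have "(\<integral>y. f y \<partial>Q) = (\<integral>y. kernel_cost k y \<partial>Q) - norm x0"
      unfolding f_def using integrable_kernel_cost by (simp add: Q.prob_space)
    moreover have "(\<Sum>i<m. f (Y i \<omega>)) / m = (\<Sum>i<m. kernel_cost k (Y i \<omega>)) / m - norm x0"
      unfolding f_def using m by (simp add: sum_subtractf field_simps)
    ultimately show ?thesis by simp
  qed
  note sample = M.expectation_abs_sample_mean_deviation[OF m Y_rv Y_dist Y_indep f_measurable f2]
  show "integrable M (\<lambda>\<omega>. \<bar>(\<Sum>i<m. kernel_cost k (Y i \<omega>)) / m - (\<integral>y. kernel_cost k y \<partial>Q)\<bar>)"
    using sample(1) unfolding shift .
  have "(\<integral>\<omega>. \<bar>(\<Sum>i<m. kernel_cost k (Y i \<omega>)) / m - (\<integral>y. kernel_cost k y \<partial>Q)\<bar> \<partial>M)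
      \<le> sqrt ((\<integral>y. (f y)\<^sup>2 \<partial>Q) / m)"
    using sample(2) unfolding shift .
  also have "\<dots> \<le> sqrt ((2 * (\<integral>y. (norm y)\<^sup>2 \<partial>Q) + 2 * (diameter X)\<^sup>2) / m)"
    using f2_bound m by (simp add: divide_right_mono)
  finally show "(\<integral>\<omega>. \<bar>(\<Sum>i<m. kernel_cost k (Y i \<omega>)) / m - (\<integral>y. kernel_cost k y \<partial>Q)\<bar> \<partial>M)
      \<le> sqrt ((2 * (\<integral>y. (norm y)\<^sup>2 \<partial>Q) + 2 * (diameter X)\<^sup>2) / m)" .
qed

lemma expectation_abs_column_mean:
  assumes x: "x \<in> X"
  shows "integrable M (\<lambda>\<omega>. \<bar>(\<Sum>i<m. k (Y i \<omega>) x) / m - mass x\<bar>)"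
    and "(\<integral>\<omega>. \<bar>(\<Sum>i<m. k (Y i \<omega>) x) / m - mass x\<bar> \<partial>M) \<le> sqrt (mass x / m)"
proof -
  interpret M: prob_space M by (rule prob_M)
  interpret Q: prob_space Q by (rule prob_Q)
  have k_int: "integrable Q (\<lambda>y. k y x)" and k2_int: "integrable Q (\<lambda>y. (k y x)\<^sup>2)"
    using kernel_le_1[OF x] k_nonneg k_measurable[of x]
    by (auto intro!: Q.integrable_const_bound[where B = 1] simp: measurable_Q_iff abs_square_le_1)
  have "ennreal (\<integral>y. k y x \<partial>Q) = ennreal (mass x)"
    using k_int k_nonneg k_mass[OF x] by (subst nn_integral_eq_integral[symmetric]) auto
  then have k_mean: "(\<integral>y. k y x \<partial>Q) = mass x"
    using k_nonneg mass_nonneg by (simp add: ennreal_inj integral_nonneg_AE)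
  have "(\<integral>y. (k y x)\<^sup>2 \<partial>Q) \<le> (\<integral>y. k y x \<partial>Q)"
    using k2_int k_int kernel_le_1[OF x] k_nonneg
    by (intro integral_mono) (auto simp: power2_eq_square mult_left_le_one_le)
  then have k2_bound: "(\<integral>y. (k y x)\<^sup>2 \<partial>Q) \<le> mass x" using k_mean by simp
  note sample = M.expectation_abs_sample_mean_deviation[OF m Y_rv Y_dist Y_indep k_measurable k2_int]
  show "integrable M (\<lambda>\<omega>. \<bar>(\<Sum>i<m. k (Y i \<omega>) x) / m - mass x\<bar>)"
    using sample(1) k_mean by simp
  have "(\<integral>\<omega>. \<bar>(\<Sum>i<m. k (Y i \<omega>) x) / m - mass x\<bar> \<partial>M) \<le> sqrt ((\<integral>y. (k y x)\<^sup>2 \<partial>Q) / m)"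
    using sample(2) k_mean by simp
  also have "\<dots> \<le> sqrt (mass x / m)"
    using k2_bound m by (simp add: divide_right_mono)
  finally show "(\<integral>\<omega>. \<bar>(\<Sum>i<m. k (Y i \<omega>) x) / m - mass x\<bar> \<partial>M) \<le> sqrt (mass x / m)" .
qed

lemma expectation_sum_abs_column_mean:
  shows "integrable M (\<lambda>\<omega>. \<Sum>x\<in>X. \<bar>(\<Sum>i<m. k (Y i \<omega>) x) / m - mass x\<bar>)"
    and "(\<integral>\<omega>. (\<Sum>x\<in>X. \<bar>(\<Sum>i<m. k (Y i \<omega>) x) / m - mass x\<bar>) \<partial>M) \<le> sqrt (card X / m)"
proof -
  show "integrable M (\<lambda>\<omega>. \<Sum>x\<in>X. \<bar>(\<Sum>i<m. k (Y i \<omega>) x) / m - mass x\<bar>)"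
    using expectation_abs_column_mean(1) by auto
  have "(\<integral>\<omega>. (\<Sum>x\<in>X. \<bar>(\<Sum>i<m. k (Y i \<omega>) x) / m - mass x\<bar>) \<partial>M)
      = (\<Sum>x\<in>X. \<integral>\<omega>. \<bar>(\<Sum>i<m. k (Y i \<omega>) x) / m - mass x\<bar> \<partial>M)"
    using expectation_abs_column_mean(1) by (simp add: Bochner_Integration.integral_sum)
  also have "\<dots> \<le> (\<Sum>x\<in>X. sqrt (mass x) / sqrt m)"
    using expectation_abs_column_mean(2) by (intro sum_mono) (simp add: real_sqrt_divide)
  also have "\<dots> \<le> sqrt (card X) / sqrt m"
    using sum_sqrt_le_sqrt_card[of X mass] mass_nonneg sum_mass
    by (simp add: sum_divide_distrib[symmetric] divide_right_mono)
  finally show "(\<integral>\<omega>. (\<Sum>x\<in>X. \<bar>(\<Sum>i<m. k (Y i \<omega>) x) / m - mass x\<bar>) \<partial>M) \<le> sqrt (card X / m)"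
    by (simp add: real_sqrt_divide)
qed

end

lemma expectation_excess_le:
  assumes \<epsilon>: "\<epsilon> > 0"
  shows "(\<integral>\<omega>. max (W1_Y \<omega> - enn2real (W1 P Q)) 0 \<partial>M)
    \<le> sqrt ((2 * (\<integral>y. (norm y)\<^sup>2 \<partial>Q) + 2 * (diameter X)\<^sup>2) / m) + \<epsilon>
      + diameter X * sqrt (card X / m)"
proof -
  interpret M: prob_space M by (rule prob_M)
  interpret Q: prob_space Q by (rule prob_Q)
  define W where "W = enn2real (W1 P Q)"
  have "W1 P Q = ennreal W"
    unfolding W_def by (rule W1_finite)
  moreover have "0 \<le> W" by (simp add: W_def)
  ultimately have "W1 P Q < ennreal (W + \<epsilon>)"
    using \<epsilon> by (simp add: ennreal_lessI)
  then obtain \<pi> where \<pi>: "\<pi> \<in> couplings P Q"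
    and \<pi>_cost: "(\<integral>\<^sup>+z. ennreal (norm (fst z - snd z)) \<partial>\<pi>) < ennreal (W + \<epsilon>)"
    unfolding W1_def by (auto simp: INF_less_iff)
  obtain k where k: "\<And>x. (\<lambda>y. k y x) \<in> borel_measurable borel" "\<And>y x. 0 \<le> k y x"
      "\<And>y. (\<Sum>x\<in>X. k y x) = 1" "\<And>x. x \<in> X \<Longrightarrow> (\<integral>\<^sup>+y. ennreal (k y x) \<partial>Q) = ennreal (mass x)"
    and k_cost: "(\<integral>\<^sup>+y. ennreal (\<Sum>x\<in>X. k y x * norm (x - y)) \<partial>Q)
      \<le> (\<integral>\<^sup>+z. ennreal (norm (fst z - snd z)) \<partial>\<pi>)"
    using coupling_kernel[OF prob_Q sets_Q \<pi>] by blast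
  define \<mu> where "\<mu> = (\<integral>y. kernel_cost k y \<partial>Q)"
  define A where "A \<omega> = \<bar>(\<Sum>i<m. kernel_cost k (Y i \<omega>)) / m - \<mu>\<bar>" for \<omega>
  define B where "B \<omega> = (\<Sum>x\<in>X. \<bar>(\<Sum>i<m. k (Y i \<omega>) x) / m - mass x\<bar>)" for \<omega>
  have "ennreal \<mu> = (\<integral>\<^sup>+y. ennreal (kernel_cost k y) \<partial>Q)"
    unfolding \<mu>_def using integrable_kernel_cost[OF k] kernel_cost_nonneg[OF k]
    by (subst nn_integral_eq_integral) auto
  also have "\<dots> < ennreal (W + \<epsilon>)"
    unfolding kernel_cost_def using le_less_trans[OF k_cost \<pi>_cost] .
  finally have \<mu>_less: "\<mu> < W + \<epsilon>"
    using kernel_cost_nonneg[OF k] by (simp add: ennreal_less_iff \<mu>_def integral_nonneg_AE)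
  have A: "integrable M A" "(\<integral>\<omega>. A \<omega> \<partial>M) \<le> sqrt ((2 * (\<integral>y. (norm y)\<^sup>2 \<partial>Q) + 2 * (diameter X)\<^sup>2) / m)"
    unfolding A_def \<mu>_def using expectation_abs_mean_kernel_cost[OF k] by simp_all
  have B: "integrable M B" "(\<integral>\<omega>. B \<omega> \<partial>M) \<le> sqrt (card X / m)"
    unfolding B_def using expectation_sum_abs_column_mean[OF k] by simp_all
  have pointwise: "max (W1_Y \<omega> - W) 0 \<le> A \<omega> + \<epsilon> + diameter X * B \<omega>" for \<omega>
  proof -
    have "W1_Y \<omega> \<le> (\<Sum>i<m. kernel_cost k (Y i \<omega>)) / m + diameter X * B \<omega>"
      unfolding B_def by (rule W1_Y_le_kernel_cost[OF k])
    moreover have "(\<Sum>i<m. kernel_cost k (Y i \<omega>)) / m \<le> A \<omega> + \<mu>"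
      unfolding A_def by linarith
    moreover have "0 \<le> diameter X * B \<omega>"
      unfolding B_def using diameter_nonneg by (simp add: sum_nonneg)
    moreover have "0 \<le> A \<omega>" by (simp add: A_def)
    ultimately show ?thesis using \<mu>_less \<epsilon> by (simp add: max_def)
  qed
  have "(\<integral>\<omega>. max (W1_Y \<omega> - W) 0 \<partial>M) \<le> (\<integral>\<omega>. A \<omega> + \<epsilon> + diameter X * B \<omega> \<partial>M)"
    using A(1) B(1) pointwise integrable_W1_Y
    by (intro integral_mono) (auto intro!: Bochner_Integration.integrable_max)
  also have "\<dots> = (\<integral>\<omega>. A \<omega> \<partial>M) + \<epsilon> + diameter X * (\<integral>\<omega>. B \<omega> \<partial>M)"
    using A(1) B(1) by (simp add: M.prob_space)
  also have "\<dots> \<le> sqrt ((2 * (\<integral>y. (norm y)\<^sup>2 \<partial>Q) + 2 * (diameter X)\<^sup>2) / m) + \<epsilon>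
      + diameter X * sqrt (card X / m)"
    using A(2) B(2) diameter_nonneg by (intro add_mono mult_left_mono order_refl) auto
  finally show ?thesis unfolding W_def .
qed

text \<open>Since \<open>W1 P Q\<close> is at most the mean of \<open>W1_Y\<close>, the absolute deviation is at most twice the
  mean excess.\<close>

lemma expectation_abs_deviation:
  shows "integrable M (\<lambda>\<omega>. \<bar>W1_Y \<omega> - enn2real (W1 P Q)\<bar>)"
    and "(\<integral>\<omega>. \<bar>W1_Y \<omega> - enn2real (W1 P Q)\<bar> \<partial>M)
      \<le> 2 * sqrt ((2 * (\<integral>y. (norm y)\<^sup>2 \<partial>Q) + 2 * (diameter X)\<^sup>2) / m)
        + 2 * diameter X * sqrt (card X / m)"
proof -
  interpret M: prob_space M by (rule prob_M)
  define W where "W = enn2real (W1 P Q)"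
  have Z: "integrable M (\<lambda>\<omega>. W1_Y \<omega> - W)" using integrable_W1_Y by simp
  then show "integrable M (\<lambda>\<omega>. \<bar>W1_Y \<omega> - enn2real (W1 P Q)\<bar>)" by (simp add: W_def)
  have excess: "integrable M (\<lambda>\<omega>. max (W1_Y \<omega> - W) 0)"
    using Z by (intro Bochner_Integration.integrable_max) auto
  have "(\<integral>\<omega>. \<bar>W1_Y \<omega> - W\<bar> \<partial>M) = (\<integral>\<omega>. 2 * max (W1_Y \<omega> - W) 0 - (W1_Y \<omega> - W) \<partial>M)"
    by (intro Bochner_Integration.integral_cong) (auto simp: abs_if max_def)
  also have "\<dots> = 2 * (\<integral>\<omega>. max (W1_Y \<omega> - W) 0 \<partial>M) - (\<integral>\<omega>. W1_Y \<omega> - W \<partial>M)"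
    using excess Z by simp
  also have "\<dots> \<le> 2 * (\<integral>\<omega>. max (W1_Y \<omega> - W) 0 \<partial>M)"
    using W1_le_expectation integrable_W1_Y by (simp add: W_def M.prob_space)
  finally have abs_le: "(\<integral>\<omega>. \<bar>W1_Y \<omega> - W\<bar> \<partial>M) \<le> 2 * (\<integral>\<omega>. max (W1_Y \<omega> - W) 0 \<partial>M)" .
  show "(\<integral>\<omega>. \<bar>W1_Y \<omega> - enn2real (W1 P Q)\<bar> \<partial>M)
      \<le> 2 * sqrt ((2 * (\<integral>y. (norm y)\<^sup>2 \<partial>Q) + 2 * (diameter X)\<^sup>2) / m)
        + 2 * diameter X * sqrt (card X / m)"
  proof (rule field_le_epsilon)
    fix \<epsilon> :: real assume "\<epsilon> > 0"
    have "(\<integral>\<omega>. max (W1_Y \<omega> - W) 0 \<partial>M)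
        \<le> sqrt ((2 * (\<integral>y. (norm y)\<^sup>2 \<partial>Q) + 2 * (diameter X)\<^sup>2) / m) + \<epsilon> / 2
          + diameter X * sqrt (card X / m)"
      unfolding W_def by (rule expectation_excess_le) (use \<open>\<epsilon> > 0\<close> in simp)
    then have "2 * (\<integral>\<omega>. max (W1_Y \<omega> - W) 0 \<partial>M)
        \<le> 2 * (sqrt ((2 * (\<integral>y. (norm y)\<^sup>2 \<partial>Q) + 2 * (diameter X)\<^sup>2) / m) + \<epsilon> / 2
          + diameter X * sqrt (card X / m))"
      by simp
    with abs_le have "(\<integral>\<omega>. \<bar>W1_Y \<omega> - W\<bar> \<partial>M)
        \<le> 2 * (sqrt ((2 * (\<integral>y. (norm y)\<^sup>2 \<partial>Q) + 2 * (diameter X)\<^sup>2) / m) + \<epsilon> / 2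
          + diameter X * sqrt (card X / m))"
      by (rule order_trans)
    then show "(\<integral>\<omega>. \<bar>W1_Y \<omega> - enn2real (W1 P Q)\<bar> \<partial>M)
        \<le> 2 * sqrt ((2 * (\<integral>y. (norm y)\<^sup>2 \<partial>Q) + 2 * (diameter X)\<^sup>2) / m)
          + 2 * diameter X * sqrt (card X / m) + \<epsilon>"
      by (simp add: W_def algebra_simps)
  qed
qed

end

lemma deviation_rate_le_stated_bound:
  fixes s D N m :: real
  assumes s: "0 \<le> s" and D: "0 \<le> D" and N: "1 \<le> N" and m: "1 \<le> m"
  shows "2 * sqrt ((2 * s + 2 * D\<^sup>2) / m) + 2 * D * sqrt (N / m)
    \<le> 8 * sqrt (2 * N) / sqrt m * ((4 * D + 2 * sqrt s + 2 * D) * (ln 2 + sqrt (2 * D + 1)))"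
proof -
  define r where "r = sqrt s"
  define L where "L = ln 2 + sqrt (2 * D + 1)"
  have r: "0 \<le> r" "r\<^sup>2 = s" using s by (auto simp: r_def)
  have L: "1 \<le> L" using D by (simp add: L_def add_nonneg_nonneg add_increasing)
  have sqrtN: "1 \<le> sqrt N" "sqrt N \<le> sqrt (2 * N)" using N by auto
  have "sqrt (2 * s + 2 * D\<^sup>2) \<le> 2 * r + 2 * D"
    using r D by (intro real_le_lsqrt) (auto simp: power2_eq_square algebra_simps)
  moreover have "2 * r + 2 * D \<le> (2 * r + 2 * D) * sqrt N"
    using sqrtN r D by (simp add: mult_le_cancel_left1)
  moreover have "0 \<le> r * sqrt N" "0 \<le> D * sqrt N"
    using sqrtN r D by simp_all
  ultimately have "2 * sqrt (2 * s + 2 * D\<^sup>2) + 2 * D * sqrt N \<le> 8 * sqrt N * (6 * D + 2 * r)"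
    by (simp add: algebra_simps)
  also have "\<dots> \<le> 8 * sqrt (2 * N) * ((6 * D + 2 * r) * L)"
    using sqrtN r D L by (intro mult_mono mult_left_mono) (auto simp: mult_le_cancel_left1)
  finally have "(2 * sqrt (2 * s + 2 * D\<^sup>2) + 2 * D * sqrt N) / sqrt m
      \<le> 8 * sqrt (2 * N) * ((6 * D + 2 * r) * L) / sqrt m"
    using m by (intro divide_right_mono) simp_all
  moreover have "2 * sqrt ((2 * s + 2 * D\<^sup>2) / m) + 2 * D * sqrt (N / m)
      = (2 * sqrt (2 * s + 2 * D\<^sup>2) + 2 * D * sqrt N) / sqrt m"
    unfolding real_sqrt_divide by (simp add: add_divide_distrib)
  ultimately show ?thesis by (simp add: r_def L_def)
qed

theorem theorem2:
  fixes X :: "'a::euclidean_space set" and N m :: nat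
    and P Q :: "'a measure" and M :: "'b measure" and Y :: "nat \<Rightarrow> 'b \<Rightarrow> 'a"
  assumes X: "finite X" "card X = N" "N \<ge> 1"
    and P: "prob_space P" "sets P = sets borel" "emeasure P X = 1"
    and Q: "prob_space Q" "sets Q = sets borel" "integrable Q (\<lambda>y. (norm y)\<^sup>2)"
    and M: "prob_space M"
    and m: "m \<ge> 1"
    and Y_rv: "\<And>i. i < m \<Longrightarrow> Y i \<in> borel_measurable M"
    and Y_dist: "\<And>i. i < m \<Longrightarrow> distr M borel (Y i) = Q"
    and Y_indep: "prob_space.indep_vars M (\<lambda>_. borel) Y {..<m}"
  shows "integrable M (\<lambda>\<omega>. \<bar>enn2real (W1 P (empirical_measure m Y \<omega>)) - enn2real (W1 P Q)\<bar>)
    \<and> (\<integral>\<omega>. \<bar>enn2real (W1 P (empirical_measure m Y \<omega>)) - enn2real (W1 P Q)\<bar> \<partial>M)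
        \<le> 8 * sqrt (2 * real N) / sqrt (real m) *
          ((4 * diameter X + 2 * sqrt (\<integral>y. (norm y)\<^sup>2 \<partial>Q) + 2 * diameter X)
           * (ln 2 + sqrt (2 * diameter X + 1)))"
proof -
  have X_nonempty: "X \<noteq> {}" using X by auto
  interpret empirical_transport X P Q M Y m
    unfolding empirical_transport_def empirical_transport_axioms_def semidiscrete_transport_def
    using X(1) X_nonempty P Q M m Y_rv Y_dist Y_indep by blast
  have sample: "enn2real (W1 P (empirical_measure m Y \<omega>)) = W1_Y \<omega>" for \<omega>
    by (simp add: empirical_measure_eq_empirical W1_sample_def)
  have "(\<integral>\<omega>. \<bar>W1_Y \<omega> - enn2real (W1 P Q)\<bar> \<partial>M)
      \<le> 2 * sqrt ((2 * (\<integral>y. (norm y)\<^sup>2 \<partial>Q) + 2 * (diameter X)\<^sup>2) / m) + 2 * diameter X * sqrt (N / m)"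
    using expectation_abs_deviation(2) X(2) by simp
  also have "\<dots> \<le> 8 * sqrt (2 * real N) / sqrt (real m) *
      ((4 * diameter X + 2 * sqrt (\<integral>y. (norm y)\<^sup>2 \<partial>Q) + 2 * diameter X)
       * (ln 2 + sqrt (2 * diameter X + 1)))"
    using X m by (intro deviation_rate_le_stated_bound diameter_nonneg) simp_all
  finally show ?thesis
    unfolding sample using expectation_abs_deviation(1) by simp
qed

end
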